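(* Let $\mathcal{L}_4$ be the $G$-orbit of the line $Y_0=Y_2-Y_3=0$ and $\mathcal{L}_7=\{\ell^\sigma:\ell\in\mathcal{L}_4\}$. Then $\mathcal{L}_7$ is a single $G$-orbit consisting of lines meeting $\mathcal{C}$ in exactly one point and not contained in any osculating plane, and every $\ell\in\mathcal{L}_7$ satisfies $OD_2(\ell)=[0,3,\tfrac{q-3}{2},\tfrac{q-1}{2},0]$ and $OD_0(\ell)=[1,2,\tfrac{q-5}{6},\tfrac{q-3}{2},\tfrac{q+1}{3}]$ if $-3$ is a non-square in $\mathbb{F}_q$, $OD_0(\ell)=[1,2,\tfrac{q-7}{6},\tfrac{q-1}{2},\tfrac{q-1}{3}]$ if $-3$ is a square in $\mathbb{F}_q$.
   Context: Let $q$ be a power of a prime $p\neq 2,3$. In $\mathrm{PG}(3,q)$ with coordinates $(Y_0,\dots,Y_3)$, the twisted cubic is $\mathcal{C}=\{P(t)=(1,t,t^2,t^3):t\in\mathbb{F}_q\}\cup\{P(\infty)=(0,0,0,1)\}$. $G\le \mathrm{PGL}(4,q)$ is the image of $\mathrm{PGL}(2,q)$ under the map sending the matrix $\begin{pmatrix}a&b\\c&d\end{pmatrix}$ to $\begin{pmatrix} a^3&a^2b&ab^2&b^3\\ 3a^2c&a^2d+2abc&b^2c+2abd&3b^2d\\ 3ac^2&bc^2+2acd&ad^2+2bcd&3bd^2\\ c^3&c^2d&cd^2&d^3\end{pmatrix}$. Osculating planes: $\Pi(t):-t^3Y_0+3t^2Y_1-3tY_2+Y_3=0$ ($t\in\mathbb{F}_q$),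 $\Pi(\infty):Y_0=0$. Tangent line at $P\in\mathcal{C}$: the line through $P$ meeting $\mathcal{C}$ with multiplicity two at $P$. The symplectic polarity $\sigma$ maps the point $(y_0,y_1,y_2,y_3)$ to the plane $-y_3Y_0+3y_2Y_1-3y_1Y_2+y_0Y_3=0$; for a line $\ell$, $\ell^\sigma$ is the line $\bigcap_{P\in\ell}P^\sigma$. Point classes: $\mathcal{P}_1$ = points of $\mathcal{C}$; $\mathcal{P}_2$ = points not on $\mathcal{C}$ on a tangent line; $\mathcal{P}_3$ = points not on $\mathcal{C}$ on exactly three osculating planes; $\mathcal{P}_4$ = points not on $\mathcal{C}$ on exactly one osculating plane; $\mathcal{P}_5$ = points on no osculating plane. Plane classes: $\mathcal{H}_1$ = osculating planes; $\mathcal{H}_2$ = planes meeting $\mathcal{C}$ in exactly two points; $\mathcal{H}_3$ = exactly three points; $\mathcal{H}_4$ = non-osculating planes meeting $\mathcal{C}$ in exactly one point; $\mathcal{H}_5$ = planes disjoint from $\mathcal{C}$. $OD_0(\ell)$ (resp. $OD_2(\ell)$) is the list of the numbers of points of $\ell$ in $\mathcal{P}_1,\dots,\mathcal{P}_5$ (resp. planes through $\ell$ in $\mathcal{H}_1,\dots,\mathcal{H}_5$). *)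

theory Defs
  imports Complex_Main "HOL-Analysis.Finite_Cartesian_Product" "HOL-Library.Numeral_Type"
begin

text \<open>Coordinates (Y0,Y1,Y2,Y3) are indexed by the type 4 (indices 0,1,2,3).
  Points of PG(3,q) are represented as the set of all nonzero scalar multiples
  of a nonzero vector; lines and planes as sets of points.\<close>

definition v4 :: "'b \<Rightarrow> 'b \<Rightarrow> 'b \<Rightarrow> 'b \<Rightarrow> 'b ^ 4" where
  "v4 a b c d = (\<chi> i::4. if i = 0 then a else if i = 1 then b else if i = 2 then c else d)"

definition pt :: "'a::field ^ 4 \<Rightarrow> ('a ^ 4) set" where
  "pt v = {c *s v | c. c \<noteq> 0}"

definition points :: "('a::field ^ 4) set set" where
  "points = {pt v | v. v \<noteq> 0}"

definition dot4 :: "'a::field ^ 4 \<Rightarrow> 'a ^ 4 \<Rightarrow> 'a" where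
  "dot4 w v = (\<Sum>i\<in>UNIV. w $ i * v $ i)"

definition plane :: "'a::field ^ 4 \<Rightarrow> ('a ^ 4) set set" where
  "plane w = {pt v | v. v \<noteq> 0 \<and> dot4 w v = 0}"

definition planes :: "('a::field ^ 4) set set set" where
  "planes = {plane w | w. w \<noteq> 0}"

definition indep2 :: "'a::field ^ 4 \<Rightarrow> 'a ^ 4 \<Rightarrow> bool" where
  "indep2 u v \<longleftrightarrow> (\<forall>a b. a *s u + b *s v = 0 \<longrightarrow> a = 0 \<and> b = 0)"

definition line :: "'a::field ^ 4 \<Rightarrow> 'a ^ 4 \<Rightarrow> ('a ^ 4) set set" where
  "line u v = {pt (a *s u + b *s v) | a b. a \<noteq> 0 \<or> b \<noteq> 0}"

definition lines :: "('a::field ^ 4) set set set" where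
  "lines = {line u v | u v. indep2 u v}"

text \<open>Parameters: Some t stands for t in F_q, None stands for infinity.\<close>
definition Cvec :: "'a::field option \<Rightarrow> 'a ^ 4" where
  "Cvec t = (case t of None \<Rightarrow> v4 0 0 0 1 | Some s \<Rightarrow> v4 1 s (s^2) (s^3))"

definition Ccurve :: "('a::field ^ 4) set set" where
  "Ccurve = range (\<lambda>t. pt (Cvec t))"

definition oscPlane :: "'a::field option \<Rightarrow> ('a ^ 4) set set" where
  "oscPlane t = (case t of None \<Rightarrow> plane (v4 1 0 0 0)
       | Some s \<Rightarrow> plane (v4 (- (s^3)) (3 * s^2) (- 3 * s) 1))"

text \<open>Tangent line at P(t): spanned by P(t) and the derivative vector (0,1,2t,3t^2);
  at P(infinity): spanned by (0,0,0,1) and (0,0,1,0).\<close>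
definition tangentLine :: "'a::field option \<Rightarrow> ('a ^ 4) set set" where
  "tangentLine t = (case t of None \<Rightarrow> line (v4 0 0 0 1) (v4 0 0 1 0)
       | Some s \<Rightarrow> line (v4 1 s (s^2) (s^3)) (v4 0 1 (2 * s) (3 * s^2)))"

definition nOsc :: "('a::{finite,field} ^ 4) set \<Rightarrow> nat" where
  "nOsc P = card {t. P \<in> oscPlane t}"

definition P1 :: "('a::{finite,field} ^ 4) set set" where
  "P1 = Ccurve"
definition P2 :: "('a::{finite,field} ^ 4) set set" where
  "P2 = {P \<in> points. P \<notin> Ccurve \<and> (\<exists>t. P \<in> tangentLine t)}"
definition P3 :: "('a::{finite,field} ^ 4) set set" where
  "P3 = {P \<in> points. P \<notin> Ccurve \<and> nOsc P = 3}"
definition P4 :: "('a::{finite,field} ^ 4) set set" where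
  "P4 = {P \<in> points. P \<notin> Ccurve \<and> nOsc P = 1}"
definition P5 :: "('a::{finite,field} ^ 4) set set" where
  "P5 = {P \<in> points. nOsc P = 0}"

definition H1 :: "('a::{finite,field} ^ 4) set set set" where
  "H1 = range oscPlane"
definition H2 :: "('a::{finite,field} ^ 4) set set set" where
  "H2 = {H \<in> planes. card (H \<inter> Ccurve) = 2}"
definition H3 :: "('a::{finite,field} ^ 4) set set set" where
  "H3 = {H \<in> planes. card (H \<inter> Ccurve) = 3}"
definition H4 :: "('a::{finite,field} ^ 4) set set set" where
  "H4 = {H \<in> planes. H \<notin> H1 \<and> card (H \<inter> Ccurve) = 1}"
definition H5 :: "('a::{finite,field} ^ 4) set set set" where
  "H5 = {H \<in> planes. H \<inter> Ccurve = {}}"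

definition OD0 :: "('a::{finite,field} ^ 4) set set \<Rightarrow> nat list" where
  "OD0 l = map (\<lambda>X. card (l \<inter> X)) [P1, P2, P3, P4, P5]"

definition OD2 :: "('a::{finite,field} ^ 4) set set \<Rightarrow> nat list" where
  "OD2 l = map (\<lambda>X. card {H \<in> X. l \<subseteq> H}) [H1, H2, H3, H4, H5]"

text \<open>The 4x4 matrix associated with (a b; c d); it acts on row vectors: v \<mapsto> v M.\<close>
definition gmat :: "'a::field \<Rightarrow> 'a \<Rightarrow> 'a \<Rightarrow> 'a \<Rightarrow> 'a ^ 4 ^ 4" where
  "gmat a b c d = v4
     (v4 (a^3) (a^2*b) (a*b^2) (b^3))
     (v4 (3*a^2*c) (a^2*d + 2*a*b*c) (b^2*c + 2*a*b*d) (3*b^2*d))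
     (v4 (3*a*c^2) (b*c^2 + 2*a*c*d) (a*d^2 + 2*b*c*d) (3*b*d^2))
     (v4 (c^3) (c^2*d) (c*d^2) (d^3))"

definition Gmats :: "('a::field ^ 4 ^ 4) set" where
  "Gmats = {gmat a b c d | a b c d. a * d - b * c \<noteq> 0}"

definition actPoint :: "'a::field ^ 4 ^ 4 \<Rightarrow> ('a ^ 4) set \<Rightarrow> ('a ^ 4) set" where
  "actPoint M P = (\<lambda>v. v v* M) ` P"

definition actLine :: "'a::field ^ 4 ^ 4 \<Rightarrow> ('a ^ 4) set set \<Rightarrow> ('a ^ 4) set set" where
  "actLine M l = actPoint M ` l"

definition Gorbit :: "('a::field ^ 4) set set \<Rightarrow> ('a ^ 4) set set set" where
  "Gorbit l = {actLine M l | M. M \<in> Gmats}"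

text \<open>Symplectic polarity: coordinates of the plane y^sigma.\<close>
definition sigcoef :: "'a::field ^ 4 \<Rightarrow> 'a ^ 4" where
  "sigcoef y = v4 (- (y $ 3)) (3 * y $ 2) (- 3 * y $ 1) (y $ 0)"

definition polarLine :: "('a::field ^ 4) set set \<Rightarrow> ('a ^ 4) set set" where
  "polarLine l = {Q \<in> points. \<forall>v. v \<noteq> 0 \<and> pt v \<in> l \<longrightarrow> Q \<in> plane (sigcoef v)}"

text \<open>The line Y0 = Y2 - Y3 = 0.\<close>
definition line0 :: "('a::field ^ 4) set set" where
  "line0 = line (v4 0 1 0 0) (v4 0 0 1 1)"

end

theory Submission
  imports Defs "HOL-Analysis.Cartesian_Space" "HOL-Computational_Algebra.Primes"
begin

text \<open>The map \<open>PGL(2,q) \<rightarrow> PGL(4,q)\<close> is the action on binary cubic forms, so \<open>G\<close> permutes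
  the points of the twisted cubic \<open>\<C>\<close>, its osculating planes and its tangent lines, and it
  preserves the symplectic form defining \<open>\<sigma>\<close>. Hence \<open>\<sigma>\<close> maps the orbit of \<open>\<ell>\<^sub>0\<close> onto the
  orbit of \<open>\<ell> = \<ell>\<^sub>0\<^sup>\<sigma> = {Y\<^sub>0 = 3 Y\<^sub>1, Y\<^sub>2 = 0}\<close>, and all incidence data are constant along it.

  On \<open>\<ell>\<close>, the point \<open>(3, 1, 0, 3 s)\<close> lies on \<open>\<Pi>(u)\<close> iff \<open>u\<^sup>3 - u\<^sup>2 = s\<close>, and on a tangent iff
  \<open>s \<in> {0, -4/27}\<close>, the two values where this cubic has a double root. So \<open>OD\<^sub>0(\<ell>)\<close> is the
  distribution of fibre sizes of \<open>u \<mapsto> u\<^sup>3 - u\<^sup>2\<close>: counting points and ordered pairs of distinct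
  points in the fibres gives two linear relations, the second involving the number of roots of
  \<open>m\<^sup>2 + m + 1\<close>, i.e. of square roots of \<open>-3\<close>.
  The planes through \<open>\<ell>\<close> are \<open>Y\<^sub>2 = 0\<close> and \<open>Y\<^sub>0 - 3 Y\<^sub>1 + z Y\<^sub>2 = 0\<close>; the latter meets \<open>\<C>\<close> in
  \<open>P(\<infinity>)\<close> and the roots of \<open>z u\<^sup>2 - 3 u + 1\<close>, whose number depends on whether the discriminant
  \<open>9 - 4 z\<close> is a square; this gives \<open>OD\<^sub>2(\<ell>)\<close>.\<close>

lemma UNIV_4_eq: "(UNIV::4 set) = {0, 1, 2, 3}"
proof -
  have "(4::4) = 0" by simp
  then show ?thesis using UNIV_4 by (metis insert_commute)
qed

lemma sum_UNIV_4: "sum f (UNIV::4 set) = f 0 + f 1 + f 2 + f 3"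
  unfolding UNIV_4_eq by (simp add: add.assoc)

lemma v4_nth [simp]:
  "v4 a b c d $ 0 = a" "v4 a b c d $ 1 = b" "v4 a b c d $ 2 = c" "v4 a b c d $ 3 = d"
  by (simp_all add: v4_def)

lemma vec4_eq_iff: "(v::'b^4) = w \<longleftrightarrow> v$0 = w$0 \<and> v$1 = w$1 \<and> v$2 = w$2 \<and> v$3 = w$3"
proof
  assume h: "v$0 = w$0 \<and> v$1 = w$1 \<and> v$2 = w$2 \<and> v$3 = w$3"
  show "v = w" unfolding vec_eq_iff
  proof
    fix i :: 4
    have "i \<in> {0, 1, 2, 3}" using UNIV_4_eq by blast
    then show "v$i = w$i" using h by auto
  qed
qed simp

lemma v4_eq_iff [simp]: "v4 a b c d = v4 a' b' c' d' \<longleftrightarrow> a = a' \<and> b = b' \<and> c = c' \<and> d = d'"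
  by (simp add: vec4_eq_iff)

lemma v4_expand: "v = v4 (v$0) (v$1) (v$2) (v$3)"
  by (simp add: vec4_eq_iff)

lemma v4_eq_0_iff [simp]: "v4 a b c d = (0::'b::zero^4) \<longleftrightarrow> a = 0 \<and> b = 0 \<and> c = 0 \<and> d = 0"
  by (simp add: vec4_eq_iff)

lemma smult_v4 [simp]: "k *s v4 a b c d = v4 (k*a) (k*b) (k*c) (k*d)"
  by (simp add: vec4_eq_iff)

lemma add_v4 [simp]: "v4 a b c d + v4 a' b' c' d' = v4 (a+a') (b+b') (c+c') (d+d')"
  by (simp add: vec4_eq_iff)

lemma dot4_v4 [simp]: "dot4 (v4 a b c d) (v4 x y z w) = a*x + b*y + c*z + d*w"
  by (simp add: dot4_def sum_UNIV_4)

lemma dot4_expand: "dot4 w v = w$0 * v$0 + w$1 * v$1 + w$2 * v$2 + w$3 * v$3"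
  by (simp add: dot4_def sum_UNIV_4)

lemma vector_matrix_mult_v4 [simp]:
  "v4 x y z w v* v4 r0 r1 r2 r3 = x *s r0 + y *s r1 + z *s r2 + w *s r3"
  by (simp add: vec_eq_iff vector_matrix_mult_def sum_UNIV_4 algebra_simps)

lemma vector_matrix_mult_smult: "(c *s v) v* M = c *s (v v* (M::'a::comm_ring_1^'n^'m))"
  by (simp add: vec_eq_iff vector_matrix_mult_def sum_distrib_left algebra_simps)

lemma vector_matrix_mult_add: "(u + v) v* M = u v* M + v v* (M::'a::comm_ring_1^'n^'m)"
  by (simp add: vec_eq_iff vector_matrix_mult_def sum.distrib algebra_simps)

lemma dot4_smult_right: "dot4 w (c *s v) = c * dot4 w v"
  by (simp add: dot4_def sum_distrib_left algebra_simps)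

lemma dot4_smult_left: "dot4 (c *s w) v = c * dot4 w v"
  by (simp add: dot4_def sum_distrib_left algebra_simps)

section \<open>Points, lines and planes\<close>

lemma mem_pt_iff: "u \<in> pt v \<longleftrightarrow> (\<exists>c. c \<noteq> 0 \<and> u = c *s v)"
  by (auto simp: pt_def)

lemma pt_smult: "(c::'a::field) \<noteq> 0 \<Longrightarrow> pt (c *s v) = pt (v::'a^4)"
proof (rule set_eqI)
  fix u assume c: "c \<noteq> 0"
  show "u \<in> pt (c *s v) \<longleftrightarrow> u \<in> pt v"
    unfolding mem_pt_iff
  proof
    assume "\<exists>d. d \<noteq> 0 \<and> u = d *s (c *s v)"
    then obtain d where "d \<noteq> 0" "u = d *s (c *s v)" by blast
    then show "\<exists>d. d \<noteq> 0 \<and> u = d *s v" using c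
      by (intro exI[of _ "d*c"]) (simp add: vector_smult_assoc)
  next
    assume "\<exists>d. d \<noteq> 0 \<and> u = d *s v"
    then obtain d where "d \<noteq> 0" "u = d *s v" by blast
    then show "\<exists>d. d \<noteq> 0 \<and> u = d *s (c *s v)" using c
      by (intro exI[of _ "d/c"]) (simp add: vector_smult_assoc)
  qed
qed

lemma pt_eq_iff: "pt (u::'a::field^4) = pt v \<longleftrightarrow> (\<exists>c. c \<noteq> 0 \<and> u = c *s v)"
proof
  assume "pt u = pt v"
  moreover have "u \<in> pt u" unfolding mem_pt_iff by (rule exI[of _ 1]) simp
  ultimately show "\<exists>c. c \<noteq> 0 \<and> u = c *s v" by (simp add: mem_pt_iff)
qed (auto simp: pt_smult)

lemma smult_eq_0_iff: "(c::'a::field) \<noteq> 0 \<Longrightarrow> c *s (v::'a^'n) = 0 \<longleftrightarrow> v = 0"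
  by (auto simp: vec_eq_iff)

lemma pt_in_points [simp]: "pt (v::'a::field^4) \<in> points \<longleftrightarrow> v \<noteq> 0"
proof
  assume "pt v \<in> points"
  then obtain u c where "u \<noteq> 0" "c \<noteq> 0" "v = c *s u" by (auto simp: points_def pt_eq_iff)
  then show "v \<noteq> 0" by (simp add: smult_eq_0_iff)
qed (auto simp: points_def)

lemma pointsE: "P \<in> points \<Longrightarrow> (\<And>v. v \<noteq> 0 \<Longrightarrow> P = pt v \<Longrightarrow> thesis) \<Longrightarrow> thesis"
  by (auto simp: points_def)

lemma pt_in_plane_iff: "(v::'a::field^4) \<noteq> 0 \<Longrightarrow> pt v \<in> plane w \<longleftrightarrow> dot4 w v = 0"
proof
  assume "pt v \<in> plane w"
  then obtain u c where "dot4 w u = 0" "v = c *s u" by (auto simp: plane_def pt_eq_iff)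
  then show "dot4 w v = 0" by (simp add: dot4_smult_right)
qed (auto simp: plane_def)

lemma plane_subset_points: "plane w \<subseteq> points"
  by (auto simp: plane_def)

lemma planes_subset_points: "H \<in> planes \<Longrightarrow> H \<subseteq> points"
  by (auto simp: planes_def dest: subsetD[OF plane_subset_points])

lemma plane_smult: "(c::'a::field) \<noteq> 0 \<Longrightarrow> plane (c *s w) = plane w"
  by (auto simp: plane_def dot4_smult_left)

lemma indep2_lincomb_nonzero: "indep2 u v \<Longrightarrow> a \<noteq> 0 \<or> b \<noteq> 0 \<Longrightarrow> a *s u + b *s v \<noteq> 0"
  by (auto simp: indep2_def)

lemma line_subset_points: "indep2 u v \<Longrightarrow> line u v \<subseteq> (points::('a::field^4) set set)"
  by (auto simp: line_def indep2_lincomb_nonzero)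

lemma lines_subset_points: "l \<in> lines \<Longrightarrow> l \<subseteq> points"
  by (auto simp: lines_def dest: line_subset_points)

lemma pt_in_line_iff:
  assumes "indep2 a b" "(v::'a::field^4) \<noteq> 0"
  shows "pt v \<in> line a b \<longleftrightarrow> (\<exists>x y. v = x *s a + y *s b)"
proof
  assume "pt v \<in> line a b"
  then obtain x y c where "v = c *s (x *s a + y *s b)" by (auto simp: line_def pt_eq_iff)
  then show "\<exists>x y. v = x *s a + y *s b"
    by (intro exI[of _ "c*x"] exI[of _ "c*y"]) (simp add: vector_smult_assoc vector_add_ldistrib)
next
  assume "\<exists>x y. v = x *s a + y *s b"
  with assms(2) show "pt v \<in> line a b" unfolding line_def by fastforce
qed

lemma pt_in_line_left: "pt u \<in> line u (v::'a::field^4)"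
  unfolding line_def by (rule CollectI, rule exI[of _ 1], rule exI[of _ 0]) simp

lemma pt_in_line_right: "pt v \<in> line u (v::'a::field^4)"
  unfolding line_def by (rule CollectI, rule exI[of _ 0], rule exI[of _ 1]) simp

lemma line_change_basis:
  assumes uv: "indep2 u v" and k: "(k::'a::field) \<noteq> 0" and \<beta>: "\<beta> \<noteq> 0"
  shows "line (k *s u) (\<alpha> *s u + \<beta> *s (v::'a^4)) = line u v"
proof -
  have comb: "x *s (k *s u) + y *s (\<alpha> *s u + \<beta> *s v) = (x*k + y*\<alpha>) *s u + (y*\<beta>) *s v" for x y
    by (simp add: vec_eq_iff algebra_simps)
  have uv': "indep2 (k *s u) (\<alpha> *s u + \<beta> *s v)"
    unfolding indep2_def comb
  proof (intro allI impI)
    fix x y assume "(x*k + y*\<alpha>) *s u + (y*\<beta>) *s v = 0"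
    then have "x*k + y*\<alpha> = 0 \<and> y*\<beta> = 0" using uv unfolding indep2_def by blast
    then show "x = 0 \<and> y = 0" using k \<beta> by auto
  qed
  show ?thesis
  proof (rule set_eqI)
    fix Q
    show "Q \<in> line (k *s u) (\<alpha> *s u + \<beta> *s v) \<longleftrightarrow> Q \<in> line u v"
    proof
      assume Q: "Q \<in> line (k *s u) (\<alpha> *s u + \<beta> *s v)"
      then obtain w where w: "w \<noteq> 0" "Q = pt w" using line_subset_points[OF uv'] pointsE by blast
      then obtain x y where "w = (x*k + y*\<alpha>) *s u + (y*\<beta>) *s v"
        using Q pt_in_line_iff[OF uv'] comb by metis
      then show "Q \<in> line u v" using w pt_in_line_iff[OF uv] by blast
    next
      assume Q: "Q \<in> line u v"
      then obtain w where w: "w \<noteq> 0" "Q = pt w" using line_subset_points[OF uv] pointsE by blast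
      then obtain x y where "w = x *s u + y *s v" using Q pt_in_line_iff[OF uv] by blast
      then have "w = ((x - y/\<beta>*\<alpha>)/k) *s (k *s u) + (y/\<beta>) *s (\<alpha> *s u + \<beta> *s v)"
        using k \<beta> by (simp add: vec_eq_iff field_simps)
      then show "Q \<in> line (k *s u) (\<alpha> *s u + \<beta> *s v)" using w pt_in_line_iff[OF uv'] by blast
    qed
  qed
qed

section \<open>The action of \<open>PGL(2,q)\<close>\<close>

text \<open>\<open>bin_cubic x y\<close> is the point of \<open>\<C>\<close> with homogeneous parameter \<open>(x : y)\<close>, and
  \<open>bin_cubic_deriv x y x' y'\<close> is the derivative of \<open>bin_cubic\<close> at \<open>(x, y)\<close> in direction
  \<open>(x', y')\<close>; \<open>gmat a b c d\<close> acts on both through the linear substitution of \<open>(x, y)\<close>.\<close>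

definition bin_cubic :: "'a::field \<Rightarrow> 'a \<Rightarrow> 'a^4" where
  "bin_cubic x y = v4 (x^3) (x^2*y) (x*y^2) (y^3)"

definition bin_cubic_deriv :: "'a::field \<Rightarrow> 'a \<Rightarrow> 'a \<Rightarrow> 'a \<Rightarrow> 'a^4" where
  "bin_cubic_deriv x y x' y' = v4 (3*x^2*x') (2*x*y*x' + x^2*y') (y^2*x' + 2*x*y*y') (3*y^2*y')"

definition proj_param :: "'a::field \<Rightarrow> 'a \<Rightarrow> 'a option" where
  "proj_param x y = (if x = 0 then None else Some (y/x))"

definition symp :: "'a::field^4 \<Rightarrow> 'a^4 \<Rightarrow> 'a" where
  "symp v w = dot4 (sigcoef v) w"

lemma vector_matrix_mult_gmat: "v v* gmat a b c d = v4
   (v$0*a^3 + v$1*(3*a^2*c) + v$2*(3*a*c^2) + v$3*c^3)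
   (v$0*(a^2*b) + v$1*(a^2*d + 2*a*b*c) + v$2*(b*c^2 + 2*a*c*d) + v$3*(c^2*d))
   (v$0*(a*b^2) + v$1*(b^2*c + 2*a*b*d) + v$2*(a*d^2 + 2*b*c*d) + v$3*(c*d^2))
   (v$0*b^3 + v$1*(3*b^2*d) + v$2*(3*b*d^2) + v$3*d^3)"
  by (subst v4_expand[of v]) (simp add: gmat_def)

lemma bin_cubic_gmat: "bin_cubic x y v* gmat a b c d = bin_cubic (a*x+c*y) (b*x+d*y)"
  unfolding vector_matrix_mult_gmat by (simp add: bin_cubic_def) algebra

lemma bin_cubic_deriv_gmat:
  "bin_cubic_deriv x y x' y' v* gmat a b c d =
     bin_cubic_deriv (a*x+c*y) (b*x+d*y) (a*x'+c*y') (b*x'+d*y')"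
  unfolding vector_matrix_mult_gmat by (simp add: bin_cubic_deriv_def) algebra

lemma gmat_gmat_adj: "(v v* gmat a b c d) v* gmat d (-b) (-c) a = (a*d-b*c)^3 *s v"
  by (subst (2) v4_expand[of v]) (simp add: vector_matrix_mult_gmat, algebra)

lemma gmat_adj_gmat: "(v v* gmat d (-b) (-c) a) v* gmat a b c d = (a*d-b*c)^3 *s v"
  using gmat_gmat_adj[of v d "-b" "-c" a] by (simp add: algebra_simps)

lemma symp_expand: "symp v w = - (v$3) * w$0 + 3 * v$2 * w$1 - 3 * v$1 * w$2 + v$0 * w$3"
  by (simp add: symp_def sigcoef_def dot4_expand)

lemma symp_gmat:
  "symp (v v* gmat a b c d) (w v* gmat a b c d) = (a*d-b*c)^3 * symp v w"
  unfolding symp_expand vector_matrix_mult_gmat by simp algebra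

lemma symp_gmat_adj:
  assumes "a*d-b*c \<noteq> 0"
  shows "symp v (u v* gmat d (-b) (-c) a) = symp (v v* gmat a b c d) (u::'a::field^4)"
proof -
  have "(a*d-b*c)^3 * symp v (u v* gmat d (-b) (-c) a) = symp (v v* gmat a b c d) ((a*d-b*c)^3 *s u)"
    by (simp flip: symp_gmat gmat_adj_gmat)
  also have "\<dots> = (a*d-b*c)^3 * symp (v v* gmat a b c d) u" by (simp add: symp_def dot4_smult_right)
  finally show ?thesis using assms by simp
qed

lemma actPoint_pt: "actPoint M (pt v) = pt (v v* M)"
  by (force simp: actPoint_def mem_pt_iff vector_matrix_mult_smult)

lemma vmult_gmat_nonzero: "a*d-b*c \<noteq> 0 \<Longrightarrow> (v::'a::field^4) \<noteq> 0 \<Longrightarrow> v v* gmat a b c d \<noteq> 0"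
  using gmat_gmat_adj[of v a b c d] by (auto simp: smult_eq_0_iff)

lemma vmult_gmat_adj_nonzero: "a*d-b*c \<noteq> 0 \<Longrightarrow> (v::'a::field^4) \<noteq> 0 \<Longrightarrow> v v* gmat d (-b) (-c) a \<noteq> 0"
  using vmult_gmat_nonzero[of d a "-b" "-c" v] by (simp add: mult.commute)

lemma actPoint_gmat_pt_adj: "a*d-b*c \<noteq> 0 \<Longrightarrow> actPoint (gmat a b c d) (pt (u v* gmat d (-b) (-c) a)) = pt u"
  by (simp add: actPoint_pt gmat_adj_gmat pt_smult)

lemma actPoint_gmat_points:
  "a*d-b*c \<noteq> 0 \<Longrightarrow> P \<in> points \<Longrightarrow> actPoint (gmat a b c d) P \<in> (points::('a::field^4) set set)"
  by (auto elim!: pointsE simp: actPoint_pt vmult_gmat_nonzero)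

lemma actPoint_gmat_adj_cancel:
  "a*d-b*c \<noteq> 0 \<Longrightarrow> P \<in> points \<Longrightarrow>
   actPoint (gmat d (-b) (-c) a) (actPoint (gmat a b c d) P) = (P::('a::field^4) set)"
  by (auto elim!: pointsE simp: actPoint_pt gmat_gmat_adj pt_smult)

lemma lin_map_nonzero:
  assumes "a*d-b*c \<noteq> 0" and "x \<noteq> 0 \<or> y \<noteq> 0"
  shows "a*x+c*y \<noteq> 0 \<or> b*x+d*y \<noteq> (0::'a::field)"
proof -
  have "(a*d-b*c)*x = d*(a*x+c*y) - c*(b*x+d*y)" "(a*d-b*c)*y = a*(b*x+d*y) - b*(a*x+c*y)"
    by algebra+
  then show ?thesis using assms by auto
qed

lemma Cvec_bin_cubic: "Cvec (Some s) = bin_cubic 1 s" "Cvec None = bin_cubic 0 1"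
  by (simp_all add: Cvec_def bin_cubic_def)

lemma Cvec_bin_cubic_ex: "\<exists>x y. (x \<noteq> 0 \<or> y \<noteq> 0) \<and> Cvec t = bin_cubic x (y::'a::field)"
proof (cases t)
  case None then show ?thesis by (intro exI[of _ 0] exI[of _ 1]) (simp add: Cvec_bin_cubic)
next
  case (Some s) then show ?thesis by (intro exI[of _ 1] exI[of _ s]) (simp add: Cvec_bin_cubic)
qed

lemma bin_cubic_smult_Cvec:
  "x \<noteq> 0 \<or> y \<noteq> 0 \<Longrightarrow> \<exists>k. k \<noteq> 0 \<and> bin_cubic x y = k *s Cvec (proj_param x (y::'a::field))"
proof (cases "x = 0")
  case True
  then show "x \<noteq> 0 \<or> y \<noteq> 0 \<Longrightarrow> ?thesis"
    by (intro exI[of _ "y^3"]) (simp add: proj_param_def Cvec_def bin_cubic_def)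
next
  case False
  then show ?thesis
    by (intro exI[of _ "x^3"])
       (simp add: proj_param_def Cvec_def bin_cubic_def field_simps power2_eq_square power3_eq_cube)
qed

lemma actPoint_gmat_Ccurve:
  assumes D: "a*d-b*c \<noteq> 0" and "P \<in> Ccurve"
  shows "actPoint (gmat a b c d) P \<in> (Ccurve::('a::field^4) set set)"
proof -
  obtain t where P: "P = pt (Cvec t)" using \<open>P \<in> Ccurve\<close> by (auto simp: Ccurve_def)
  obtain x y where xy: "x \<noteq> 0 \<or> y \<noteq> 0" "Cvec t = bin_cubic x (y::'a)"
    using Cvec_bin_cubic_ex by blast
  obtain k where "k \<noteq> 0"
    "bin_cubic (a*x+c*y) (b*x+d*y) = k *s Cvec (proj_param (a*x+c*y) (b*x+d*y))"
    using bin_cubic_smult_Cvec lin_map_nonzero[OF D xy(1)] by blast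
  then have "actPoint (gmat a b c d) P = pt (Cvec (proj_param (a*x+c*y) (b*x+d*y)))"
    by (simp add: P xy actPoint_pt bin_cubic_gmat pt_smult)
  then show ?thesis by (simp add: Ccurve_def)
qed

definition polar_plane :: "'a::field^4 \<Rightarrow> ('a^4) set set" where
  "polar_plane v = plane (sigcoef v)"

lemma sigcoef_smult: "sigcoef (k *s v) = k *s sigcoef v"
  by (simp add: sigcoef_def vec4_eq_iff algebra_simps)

lemma polar_plane_smult: "(k::'a::field) \<noteq> 0 \<Longrightarrow> polar_plane (k *s v) = polar_plane v"
  by (simp add: polar_plane_def sigcoef_smult plane_smult)

lemma pt_in_polar_plane_iff: "(u::'a::field^4) \<noteq> 0 \<Longrightarrow> pt u \<in> polar_plane v \<longleftrightarrow> symp v u = 0"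
  by (simp add: polar_plane_def symp_def pt_in_plane_iff)

lemma polar_plane_subset_points: "polar_plane v \<subseteq> points"
  by (simp add: polar_plane_def plane_subset_points)

lemma polarLine_eq: "polarLine l = {Q \<in> points. \<forall>v. v \<noteq> 0 \<and> pt v \<in> l \<longrightarrow> Q \<in> polar_plane v}"
  by (simp add: polarLine_def polar_plane_def)

lemma oscPlane_eq_polar_plane: "oscPlane t = polar_plane (Cvec t)"
proof (cases t)
  case None
  have "plane (v4 (-1) 0 0 0) = plane (v4 1 0 0 (0::'a))"
    using plane_smult[of "-1" "v4 1 0 0 (0::'a)"] by simp
  then show ?thesis using None by (simp add: polar_plane_def oscPlane_def sigcoef_def Cvec_def)
qed (simp add: polar_plane_def oscPlane_def sigcoef_def Cvec_def)

lemma oscPlane_subset_points: "oscPlane t \<subseteq> points"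
  by (simp add: oscPlane_eq_polar_plane polar_plane_subset_points)

lemma symp_Cvec:
  "symp (Cvec t') (Cvec t) = (case (t', t) of
     (Some s', Some s) \<Rightarrow> (s - s')^3 | (None, Some s) \<Rightarrow> -1 | (Some s', None) \<Rightarrow> 1
   | (None, None) \<Rightarrow> (0::'a::field))"
  by (cases t; cases t')
     (simp_all add: symp_expand Cvec_def power2_eq_square power3_eq_cube algebra_simps)

lemma Cvec_nonzero: "Cvec t \<noteq> (0::'a::field^4)"
  by (cases t) (simp_all add: Cvec_def)

lemma Cvec_in_oscPlane_iff: "pt (Cvec t) \<in> oscPlane t' \<longleftrightarrow> t = (t'::'a::field option)"
  by (cases t; cases t') (simp_all add: oscPlane_eq_polar_plane pt_in_polar_plane_iff Cvec_nonzero symp_Cvec)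

lemma oscPlane_inj: "oscPlane t = oscPlane t' \<Longrightarrow> t = (t'::'a::field option)"
  using Cvec_in_oscPlane_iff by metis

lemma Ccurve_pt_inj: "pt (Cvec t) = pt (Cvec t') \<Longrightarrow> t = (t'::'a::field option)"
  using Cvec_in_oscPlane_iff by metis

lemma actPoint_gmat_polar_plane:
  assumes D: "a*d-b*c \<noteq> 0"
  shows "actPoint (gmat a b c d) ` polar_plane v = polar_plane ((v::'a::field^4) v* gmat a b c d)"
proof (rule set_eqI)
  fix Q
  let ?M = "gmat a b c d"
  show "Q \<in> actPoint ?M ` polar_plane v \<longleftrightarrow> Q \<in> polar_plane (v v* ?M)"
  proof
    assume "Q \<in> actPoint ?M ` polar_plane v"
    then obtain u where u: "u \<noteq> 0" "pt u \<in> polar_plane v" "Q = actPoint ?M (pt u)"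
      using polar_plane_subset_points by (blast elim: pointsE)
    then show "Q \<in> polar_plane (v v* ?M)"
      by (simp add: actPoint_pt pt_in_polar_plane_iff symp_gmat vmult_gmat_nonzero[OF D])
  next
    assume Q: "Q \<in> polar_plane (v v* ?M)"
    then obtain u where u: "u \<noteq> 0" "Q = pt u" using polar_plane_subset_points pointsE by blast
    let ?w = "u v* gmat d (-b) (-c) a"
    have "pt ?w \<in> polar_plane v"
      using Q u D by (simp add: pt_in_polar_plane_iff symp_gmat_adj vmult_gmat_adj_nonzero)
    moreover have "actPoint ?M (pt ?w) = Q" using u D by (simp add: actPoint_gmat_pt_adj)
    ultimately show "Q \<in> actPoint ?M ` polar_plane v" by (metis image_eqI)
  qed
qed

lemma actPoint_gmat_oscPlane:
  assumes D: "a*d-b*c \<noteq> 0"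
  shows "\<exists>t'. actPoint (gmat a b c d) ` oscPlane t = oscPlane (t'::'a::field option)"
proof -
  obtain x y where xy: "x \<noteq> 0 \<or> y \<noteq> 0" "Cvec t = bin_cubic x (y::'a)"
    using Cvec_bin_cubic_ex by blast
  obtain k where k: "k \<noteq> 0"
    "bin_cubic (a*x+c*y) (b*x+d*y) = k *s Cvec (proj_param (a*x+c*y) (b*x+d*y))"
    using bin_cubic_smult_Cvec lin_map_nonzero[OF D xy(1)] by blast
  have "actPoint (gmat a b c d) ` oscPlane t = oscPlane (proj_param (a*x+c*y) (b*x+d*y))"
    using actPoint_gmat_polar_plane[OF D, of "bin_cubic x y"]
    by (simp add: oscPlane_eq_polar_plane xy bin_cubic_gmat k polar_plane_smult)
  then show ?thesis by blast
qed

lemma indep2_vmult_gmat: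
  assumes D: "a*d-b*c \<noteq> 0" and uv: "indep2 u v"
  shows "indep2 (u v* gmat a b c d) ((v::'a::field^4) v* gmat a b c d)"
  unfolding indep2_def
proof (intro allI impI)
  fix x y assume "x *s (u v* gmat a b c d) + y *s (v v* gmat a b c d) = 0"
  then have "(x *s u + y *s v) v* gmat a b c d = 0"
    by (simp add: vector_matrix_mult_add vector_matrix_mult_smult)
  then have "x *s u + y *s v = 0" using vmult_gmat_nonzero[OF D] by blast
  then show "x = 0 \<and> y = 0" using uv by (simp add: indep2_def)
qed

lemma actPoint_line: "actPoint M ` line u v = line (u v* M) (v v* M)"
proof (rule set_eqI)
  fix Q
  show "Q \<in> actPoint M ` line u v \<longleftrightarrow> Q \<in> line (u v* M) (v v* M)"
  proof
    assume "Q \<in> actPoint M ` line u v"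
    then obtain x y where "x \<noteq> 0 \<or> y \<noteq> 0" "Q = actPoint M (pt (x *s u + y *s v))"
      by (auto simp: line_def)
    then show "Q \<in> line (u v* M) (v v* M)"
      by (auto simp: line_def actPoint_pt vector_matrix_mult_add vector_matrix_mult_smult)
  next
    assume "Q \<in> line (u v* M) (v v* M)"
    then obtain x y where xy: "x \<noteq> 0 \<or> y \<noteq> 0" "Q = pt (x *s (u v* M) + y *s (v v* M))"
      by (auto simp: line_def)
    then have "Q = actPoint M (pt (x *s u + y *s v))"
      by (simp add: actPoint_pt vector_matrix_mult_add vector_matrix_mult_smult)
    moreover have "pt (x *s u + y *s v) \<in> line u v" using xy(1) by (auto simp: line_def)
    ultimately show "Q \<in> actPoint M ` line u v" by blast
  qed
qed

lemma actPoint_gmat_lines: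
  assumes D: "a*d-b*c \<noteq> 0" and "l \<in> lines"
  shows "actPoint (gmat a b c d) ` l \<in> (lines::('a::field^4) set set set)"
proof -
  obtain u v where "indep2 u v" "l = line u (v::'a^4)" using \<open>l \<in> lines\<close> by (auto simp: lines_def)
  then show ?thesis using indep2_vmult_gmat[OF D] by (auto simp: lines_def actPoint_line)
qed

definition Cderiv :: "'a::field option \<Rightarrow> 'a^4" where
  "Cderiv t = (case t of None \<Rightarrow> v4 0 0 1 0 | Some s \<Rightarrow> v4 0 1 (2 * s) (3 * s^2))"

lemma tangentLine_eq: "tangentLine t = line (Cvec t) (Cderiv t)"
  by (cases t) (simp_all add: tangentLine_def Cvec_def Cderiv_def)

lemma indep2_Cvec_Cderiv: "indep2 (Cvec t) (Cderiv (t::'a::field option))"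
proof (cases t)
  case (Some s)
  show ?thesis unfolding indep2_def
  proof (intro allI impI)
    fix x y assume "x *s Cvec t + y *s Cderiv t = 0"
    then have "x = 0" "x * s + y = 0"
      using Some by (auto simp: Cvec_def Cderiv_def dest: arg_cong[where f="\<lambda>v. v$0"] arg_cong[where f="\<lambda>v. v$1"])
    then show "x = 0 \<and> y = 0" by simp
  qed
qed (simp add: indep2_def Cvec_def Cderiv_def)

lemma line_bin_cubic_tangentLine:
  assumes "x*y' - y*x' \<noteq> 0"
  shows "line (bin_cubic x y) (bin_cubic_deriv x y x' y') = tangentLine (proj_param x (y::'a::field))"
proof -
  have "\<exists>k \<alpha> \<beta>. k \<noteq> 0 \<and> \<beta> \<noteq> 0 \<and> bin_cubic x y = k *s Cvec (proj_param x y) \<and>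
     bin_cubic_deriv x y x' y' = \<alpha> *s Cvec (proj_param x y) + \<beta> *s Cderiv (proj_param x y)"
  proof (cases "x = 0")
    case True
    then show ?thesis using assms
      by (intro exI[of _ "y^3"] exI[of _ "3*y^2*y'"] exI[of _ "y^2*x'"])
         (simp add: proj_param_def Cvec_def Cderiv_def bin_cubic_def bin_cubic_deriv_def)
  next
    case False
    then show ?thesis using assms
      by (intro exI[of _ "x^3"] exI[of _ "3*x^2*x'"] exI[of _ "x*(x*y' - y*x')"])
         (simp add: proj_param_def Cvec_def Cderiv_def bin_cubic_def bin_cubic_deriv_def
           field_simps power2_eq_square power3_eq_cube)
  qed
  then show ?thesis using line_change_basis[OF indep2_Cvec_Cderiv] tangentLine_eq by metis
qed

lemma tangentLine_bin_cubic_ex: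
  "\<exists>x y x' y'. x*y' - y*x' \<noteq> 0 \<and> tangentLine t = line (bin_cubic x y) (bin_cubic_deriv x y x' (y'::'a::field))"
proof (cases t)
  case None
  then have "tangentLine t = line (bin_cubic 0 1) (bin_cubic_deriv 0 1 1 (0::'a))"
    using line_bin_cubic_tangentLine[of 0 0 1 1] by (simp add: proj_param_def eq_commute)
  then show ?thesis by (intro exI[of _ 0] exI[of _ 1] exI[of _ 1] exI[of _ 0]) simp
next
  case (Some s)
  then have "tangentLine t = line (bin_cubic 1 s) (bin_cubic_deriv 1 s 0 1)"
    using line_bin_cubic_tangentLine[of 1 1 s 0] by (simp add: proj_param_def eq_commute)
  then show ?thesis by (intro exI[of _ 1] exI[of _ s] exI[of _ 0] exI[of _ 1]) simp
qed

lemma actPoint_gmat_tangentLine: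
  assumes D: "a*d-b*c \<noteq> 0"
  shows "\<exists>t'. actPoint (gmat a b c d) ` tangentLine t = tangentLine (t'::'a::field option)"
proof -
  obtain x y x' y' where h: "x*y' - y*x' \<noteq> 0"
    "tangentLine t = line (bin_cubic x y) (bin_cubic_deriv x y x' (y'::'a))"
    using tangentLine_bin_cubic_ex by blast
  have det: "(a*x+c*y)*(b*x'+d*y') - (b*x+d*y)*(a*x'+c*y') = (a*d-b*c)*(x*y' - y*x')"
    by algebra
  have "actPoint (gmat a b c d) ` tangentLine t =
     line (bin_cubic (a*x+c*y) (b*x+d*y)) (bin_cubic_deriv (a*x+c*y) (b*x+d*y) (a*x'+c*y') (b*x'+d*y'))"
    by (simp add: h(2) actPoint_line bin_cubic_gmat bin_cubic_deriv_gmat)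
  also have "\<dots> = tangentLine (proj_param (a*x+c*y) (b*x+d*y))"
    using D h(1) det by (intro line_bin_cubic_tangentLine) simp
  finally show ?thesis by blast
qed

lemma sigcoef_nonzero: "(3::'a::field) \<noteq> 0 \<Longrightarrow> (v::'a^4) \<noteq> 0 \<Longrightarrow> sigcoef v \<noteq> 0"
  unfolding sigcoef_def by (subst (asm) v4_expand[of v]) auto

lemma actPoint_gmat_planes:
  assumes 3: "(3::'a::field) \<noteq> 0" and D: "a*d-b*c \<noteq> 0" and "H \<in> planes"
  shows "actPoint (gmat a b c d) ` H \<in> (planes::('a^4) set set set)"
proof -
  obtain w where w: "w \<noteq> 0" "H = plane (w::'a^4)" using \<open>H \<in> planes\<close> by (auto simp: planes_def)
  let ?v = "v4 (w$3) (-(w$2)/3) (w$1/3) (-(w$0))"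
  have "plane w = polar_plane ?v"
    unfolding polar_plane_def sigcoef_def by (subst v4_expand[of w]) (simp add: 3)
  then have "actPoint (gmat a b c d) ` H = plane (sigcoef (?v v* gmat a b c d))"
    using w(2) actPoint_gmat_polar_plane[OF D] by (simp add: polar_plane_def)
  moreover have "?v \<noteq> 0" using w 3 by (subst (asm) v4_expand[of w]) auto
  then have "sigcoef (?v v* gmat a b c d) \<noteq> 0"
    using sigcoef_nonzero[OF 3] vmult_gmat_nonzero[OF D] by blast
  ultimately show ?thesis by (auto simp: planes_def)
qed

lemma polarLine_actLine:
  assumes D: "a*d-b*c \<noteq> 0" and l: "l \<subseteq> points"
  shows "polarLine (actLine (gmat a b c d) l) = actLine (gmat a b c d) (polarLine (l::('a::field^4) set set))"
proof (rule set_eqI)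
  fix Q
  let ?M = "gmat a b c d"
  show "Q \<in> polarLine (actLine ?M l) \<longleftrightarrow> Q \<in> actLine ?M (polarLine l)"
  proof
    assume Q: "Q \<in> polarLine (actLine ?M l)"
    then obtain u where u: "u \<noteq> 0" "Q = pt u" by (auto simp: polarLine_eq elim: pointsE)
    let ?w = "u v* gmat d (-b) (-c) a"
    have w0: "?w \<noteq> 0" using u D by (simp add: vmult_gmat_adj_nonzero)
    have "pt ?w \<in> polarLine l" unfolding polarLine_eq
    proof (intro CollectI conjI allI impI)
      show "pt ?w \<in> points" using w0 by simp
      fix v assume v: "v \<noteq> 0 \<and> pt v \<in> l"
      then have "pt (v v* ?M) \<in> actLine ?M l" by (auto simp: actLine_def actPoint_pt[symmetric])
      then have "Q \<in> polar_plane (v v* ?M)"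
        using Q v vmult_gmat_nonzero[OF D] by (auto simp: polarLine_eq)
      then show "pt ?w \<in> polar_plane v" using u D w0 by (simp add: pt_in_polar_plane_iff symp_gmat_adj)
    qed
    moreover have "actPoint ?M (pt ?w) = Q" using u D by (simp add: actPoint_gmat_pt_adj)
    ultimately show "Q \<in> actLine ?M (polarLine l)" unfolding actLine_def by (metis image_eqI)
  next
    assume "Q \<in> actLine ?M (polarLine l)"
    then obtain u where u: "u \<noteq> 0" "pt u \<in> polarLine l" "Q = pt (u v* ?M)"
      by (auto simp: actLine_def polarLine_eq actPoint_pt elim!: pointsE)
    show "Q \<in> polarLine (actLine ?M l)" unfolding polarLine_eq
    proof (intro CollectI conjI allI impI)
      show "Q \<in> points" using u vmult_gmat_nonzero[OF D] by simp
      fix v' assume v': "v' \<noteq> 0 \<and> pt v' \<in> actLine ?M l"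
      then obtain v where v: "v \<noteq> 0" "pt v \<in> l" "pt v' = pt (v v* ?M)"
        using l by (auto simp: actLine_def actPoint_pt elim!: pointsE)
      then obtain k where k: "k \<noteq> 0" "v' = k *s (v v* ?M)" using pt_eq_iff by blast
      have "symp v u = 0" using u v by (simp add: polarLine_eq pt_in_polar_plane_iff)
      then have "symp v' (u v* ?M) = 0"
        by (simp add: k symp_def sigcoef_smult dot4_smult_left symp_gmat[unfolded symp_def])
      then show "Q \<in> polar_plane v'" using u vmult_gmat_nonzero[OF D] by (simp add: pt_in_polar_plane_iff)
    qed
  qed
qed

section \<open>Invariance of the orbit data\<close>

lemma oscPlane_planes: "oscPlane t \<in> (planes::('a::field^4) set set set)"
  by (cases t) (auto simp: oscPlane_def planes_def)

lemma H1_subset_planes: "H1 \<subseteq> planes"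
  by (auto simp: H1_def oscPlane_planes)

locale cubic_automorphism =
  fixes f g :: "('a::{finite,field}^4) set \<Rightarrow> ('a^4) set"
  assumes f_points: "P \<in> points \<Longrightarrow> f P \<in> points"
    and g_points: "P \<in> points \<Longrightarrow> g P \<in> points"
    and g_f: "P \<in> points \<Longrightarrow> g (f P) = P"
    and f_g: "P \<in> points \<Longrightarrow> f (g P) = P"
    and f_Ccurve: "P \<in> Ccurve \<Longrightarrow> f P \<in> Ccurve"
    and g_Ccurve: "P \<in> Ccurve \<Longrightarrow> g P \<in> Ccurve"
    and f_oscPlane: "\<exists>t'. f ` oscPlane t = oscPlane t'"
    and g_oscPlane: "\<exists>t'. g ` oscPlane t = oscPlane t'"
    and f_tangentLine: "\<exists>t'. f ` tangentLine t = tangentLine t'"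
    and g_tangentLine: "\<exists>t'. g ` tangentLine t = tangentLine t'"
    and f_planes: "H \<in> planes \<Longrightarrow> f ` H \<in> planes"
    and g_planes: "H \<in> planes \<Longrightarrow> g ` H \<in> planes"
begin

lemma inverse: "cubic_automorphism g f"
  by unfold_locales
    (erule g_points | erule f_points | erule f_g | erule g_f | erule g_Ccurve | erule f_Ccurve
     | rule g_oscPlane | rule f_oscPlane | rule g_tangentLine | rule f_tangentLine
     | erule g_planes | erule f_planes)+

lemma inj_on_points: "inj_on f points"
  by (metis g_f inj_onI)

lemma inv_image_image: "X \<subseteq> points \<Longrightarrow> g ` f ` X = X"
  by (force simp: image_image g_f)

lemma Ccurve_iff: "P \<in> points \<Longrightarrow> f P \<in> Ccurve \<longleftrightarrow> P \<in> Ccurve"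
  using f_Ccurve g_Ccurve g_f by metis

lemma nOsc_le: "P \<in> points \<Longrightarrow> nOsc P \<le> nOsc (f P)"
proof -
  assume P: "P \<in> points"
  define \<tau> where "\<tau> t = (SOME t'. f ` oscPlane t = oscPlane t')" for t
  have \<tau>: "f ` oscPlane t = oscPlane (\<tau> t)" for t
    unfolding \<tau>_def using f_oscPlane by (rule someI_ex)
  have "inj_on \<tau> {t. P \<in> oscPlane t}"
  proof (rule inj_onI)
    fix t1 t2 assume "\<tau> t1 = \<tau> t2"
    then have "g ` f ` oscPlane t1 = g ` f ` oscPlane t2" using \<tau> by metis
    then show "t1 = t2" using inv_image_image oscPlane_subset_points oscPlane_inj by metis
  qed
  moreover have "\<tau> ` {t. P \<in> oscPlane t} \<subseteq> {t. f P \<in> oscPlane t}"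
    using \<tau> by blast
  ultimately show ?thesis unfolding nOsc_def by (metis card_inj_on_le finite)
qed

lemma nOsc_eq: "P \<in> points \<Longrightarrow> nOsc (f P) = nOsc P"
  using nOsc_le cubic_automorphism.nOsc_le[OF inverse, of "f P"] f_points g_f
  by (metis le_antisym)

lemma tangentLine_iff:
  assumes P: "P \<in> points"
  shows "(\<exists>t. f P \<in> tangentLine t) \<longleftrightarrow> (\<exists>t. P \<in> tangentLine t)"
proof
  assume "\<exists>t. f P \<in> tangentLine t"
  then obtain t where "g (f P) \<in> g ` tangentLine t" by blast
  then show "\<exists>t. P \<in> tangentLine t" using g_tangentLine g_f P by metis
next
  assume "\<exists>t. P \<in> tangentLine t"
  then obtain t where "f P \<in> f ` tangentLine t" by blast
  then show "\<exists>t. f P \<in> tangentLine t" using f_tangentLine by metis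
qed

lemma point_classes_iff:
  assumes "P \<in> points"
  shows "f P \<in> P1 \<longleftrightarrow> P \<in> P1" "f P \<in> P2 \<longleftrightarrow> P \<in> P2" "f P \<in> P3 \<longleftrightarrow> P \<in> P3"
    "f P \<in> P4 \<longleftrightarrow> P \<in> P4" "f P \<in> P5 \<longleftrightarrow> P \<in> P5"
  using assms f_points Ccurve_iff nOsc_eq tangentLine_iff
  by (auto simp: P1_def P2_def P3_def P4_def P5_def)

lemma card_image_Int:
  assumes l: "l \<subseteq> points" and X: "\<And>P. P \<in> points \<Longrightarrow> f P \<in> X \<longleftrightarrow> P \<in> X"
  shows "card (f ` l \<inter> X) = card (l \<inter> X)"
proof -
  have "f ` l \<inter> X = f ` (l \<inter> X)" using l X by auto
  moreover have "inj_on f (l \<inter> X)" using l by (blast intro: inj_on_subset[OF inj_on_points])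
  ultimately show ?thesis by (simp add: card_image)
qed

lemma OD0_image: "l \<subseteq> points \<Longrightarrow> OD0 (f ` l) = OD0 l"
  unfolding OD0_def using card_image_Int point_classes_iff by simp

lemma card_image_Int_Ccurve: "l \<subseteq> points \<Longrightarrow> card (f ` l \<inter> Ccurve) = card (l \<inter> Ccurve)"
  using card_image_Int Ccurve_iff by blast

lemma H1_iff:
  assumes H: "H \<in> planes"
  shows "f ` H \<in> H1 \<longleftrightarrow> H \<in> H1"
proof
  assume "f ` H \<in> H1"
  then obtain t where "g ` f ` H = g ` oscPlane t" by (auto simp: H1_def)
  then show "H \<in> H1"
    using inv_image_image[OF planes_subset_points[OF H]] g_oscPlane by (metis H1_def rangeI)
next
  assume "H \<in> H1"
  then obtain t where "H = oscPlane t" by (auto simp: H1_def)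
  moreover obtain t' where "f ` oscPlane t = oscPlane t'" using f_oscPlane by blast
  ultimately show "f ` H \<in> H1" by (simp add: H1_def)
qed

lemma plane_classes_iff:
  assumes H: "H \<in> planes"
  shows "f ` H \<in> H1 \<longleftrightarrow> H \<in> H1" "f ` H \<in> H2 \<longleftrightarrow> H \<in> H2" "f ` H \<in> H3 \<longleftrightarrow> H \<in> H3"
    "f ` H \<in> H4 \<longleftrightarrow> H \<in> H4" "f ` H \<in> H5 \<longleftrightarrow> H \<in> H5"
proof -
  have c: "card (f ` H \<inter> Ccurve) = card (H \<inter> Ccurve)"
    using card_image_Int_Ccurve planes_subset_points H by blast
  have e: "f ` H \<inter> Ccurve = {} \<longleftrightarrow> H \<inter> Ccurve = {}"
    using H planes_subset_points Ccurve_iff by blast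
  show "f ` H \<in> H1 \<longleftrightarrow> H \<in> H1" using H1_iff H .
  show "f ` H \<in> H2 \<longleftrightarrow> H \<in> H2" "f ` H \<in> H3 \<longleftrightarrow> H \<in> H3"
    using c H f_planes by (auto simp: H2_def H3_def)
  show "f ` H \<in> H4 \<longleftrightarrow> H \<in> H4" using c H f_planes H1_iff[OF H] by (auto simp: H4_def)
  show "f ` H \<in> H5 \<longleftrightarrow> H \<in> H5" using e H f_planes by (auto simp: H5_def)
qed

lemma card_planes_through_image:
  assumes l: "l \<subseteq> points" and X_planes: "X \<subseteq> planes"
    and X: "\<And>H. H \<in> planes \<Longrightarrow> f ` H \<in> X \<longleftrightarrow> H \<in> X"
  shows "card {H \<in> X. f ` l \<subseteq> H} = card {H \<in> X. l \<subseteq> H}"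
proof -
  have "{H \<in> X. f ` l \<subseteq> H} = image f ` {H \<in> X. l \<subseteq> H}"
  proof (rule set_eqI, rule iffI)
    fix H assume H: "H \<in> {H \<in> X. f ` l \<subseteq> H}"
    then have H_planes: "H \<in> planes" using X_planes by auto
    have "f ` g ` H = (\<lambda>P. f (g P)) ` H" by (simp add: image_image)
    also have "\<dots> = H" using planes_subset_points[OF H_planes] f_g by (simp add: subset_iff)
    finally have fgH: "f ` g ` H = H" .
    have "g ` H \<in> X" using X[of "g ` H"] g_planes[OF H_planes] fgH H by simp
    moreover have "l \<subseteq> g ` H" using H inv_image_image[OF l] by blast
    ultimately show "H \<in> image f ` {H \<in> X. l \<subseteq> H}" using fgH by blast
  next
    fix H assume "H \<in> image f ` {H \<in> X. l \<subseteq> H}"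
    then show "H \<in> {H \<in> X. f ` l \<subseteq> H}" using X X_planes by auto
  qed
  moreover have "inj_on (image f) {H \<in> X. l \<subseteq> H}"
  proof (rule inj_onI)
    fix A B assume A: "A \<in> {H \<in> X. l \<subseteq> H}" and B: "B \<in> {H \<in> X. l \<subseteq> H}"
      and AB: "f ` A = f ` B"
    have "A \<in> planes" "B \<in> planes" using A B X_planes by auto
    then have "g ` f ` A = A" "g ` f ` B = B" by (simp_all add: inv_image_image planes_subset_points)
    then show "A = B" using AB by metis
  qed
  ultimately show ?thesis by (simp add: card_image)
qed

lemma OD2_image:
  assumes l: "l \<subseteq> points"
  shows "OD2 (f ` l) = OD2 l"
proof -
  have "card {H \<in> H1. f ` l \<subseteq> H} = card {H \<in> H1. l \<subseteq> H}"
    by (rule card_planes_through_image[OF l H1_subset_planes plane_classes_iff(1)])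
  moreover have "card {H \<in> H2. f ` l \<subseteq> H} = card {H \<in> H2. l \<subseteq> H}"
    by (rule card_planes_through_image[OF l _ plane_classes_iff(2)]) (auto simp: H2_def)
  moreover have "card {H \<in> H3. f ` l \<subseteq> H} = card {H \<in> H3. l \<subseteq> H}"
    by (rule card_planes_through_image[OF l _ plane_classes_iff(3)]) (auto simp: H3_def)
  moreover have "card {H \<in> H4. f ` l \<subseteq> H} = card {H \<in> H4. l \<subseteq> H}"
    by (rule card_planes_through_image[OF l _ plane_classes_iff(4)]) (auto simp: H4_def)
  moreover have "card {H \<in> H5. f ` l \<subseteq> H} = card {H \<in> H5. l \<subseteq> H}"
    by (rule card_planes_through_image[OF l _ plane_classes_iff(5)]) (auto simp: H5_def)
  ultimately show ?thesis by (simp add: OD2_def)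
qed

lemma subset_oscPlane_image:
  assumes l: "l \<subseteq> points" and "f ` l \<subseteq> oscPlane t"
  shows "\<exists>t'. l \<subseteq> oscPlane t'"
proof -
  have "g ` f ` l \<subseteq> g ` oscPlane t" using assms(2) by blast
  then show ?thesis using inv_image_image[OF l] g_oscPlane by metis
qed

end

lemma gmat_cubic_automorphism:
  assumes 3: "(3::'a::{finite,field}) \<noteq> 0" and D: "a*d-b*c \<noteq> 0"
  shows "cubic_automorphism (actPoint (gmat a b c d)) (actPoint (gmat d (-b) (-c) (a::'a)))"
proof -
  have D': "d*a - (-b)*(-c) \<noteq> 0" using D by (simp add: algebra_simps)
  have adj_adj: "gmat a (- (- b)) (- (- c)) d = gmat a b c d" by simp
  show ?thesis
    by unfold_locales
      (fact actPoint_gmat_points[OF D] actPoint_gmat_points[OF D']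
        actPoint_gmat_adj_cancel[OF D] actPoint_gmat_adj_cancel[OF D', unfolded adj_adj]
        actPoint_gmat_Ccurve[OF D] actPoint_gmat_Ccurve[OF D']
        actPoint_gmat_oscPlane[OF D] actPoint_gmat_oscPlane[OF D']
        actPoint_gmat_tangentLine[OF D] actPoint_gmat_tangentLine[OF D']
        actPoint_gmat_planes[OF 3 D] actPoint_gmat_planes[OF 3 D'])+
qed

section \<open>Counting in finite fields\<close>

lemma four_neq_zero: "(2::'a::field) \<noteq> 0 \<Longrightarrow> (4::'a) \<noteq> 0"
proof -
  have "(4::'a) = 2 * 2" by simp
  then show "(2::'a) \<noteq> 0 \<Longrightarrow> (4::'a) \<noteq> 0" by (simp only: mult_eq_0_iff) simp
qed

lemma nine_neq_zero: "(3::'a::field) \<noteq> 0 \<Longrightarrow> (9::'a) \<noteq> 0"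
proof -
  have "(9::'a) = 3 * 3" by simp
  then show "(3::'a) \<noteq> 0 \<Longrightarrow> (9::'a) \<noteq> 0" by (simp only: mult_eq_0_iff) simp
qed

lemma twentyseven_neq_zero: "(3::'a::field) \<noteq> 0 \<Longrightarrow> (27::'a) \<noteq> 0"
proof -
  have "(27::'a) = 3 * 9" by simp
  moreover assume "(3::'a) \<noteq> 0"
  moreover from this have "(9::'a) \<noteq> 0" by (rule nine_neq_zero)
  ultimately show "(27::'a) \<noteq> 0" by (simp only: mult_eq_0_iff) simp
qed

lemma card_insert_range_Int:
  fixes f :: "'b::finite \<Rightarrow> 'c"
  assumes "inj f" and "a \<notin> range f"
  shows "card (insert a (range f) \<inter> X) = card {x. f x \<in> X} + (if a \<in> X then 1 else 0)"
proof -
  have "range f \<inter> X = f ` {x. f x \<in> X}" by blast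
  moreover have "card (f ` {x. f x \<in> X}) = card {x. f x \<in> X}"
    using assms(1) by (simp add: card_image inj_on_subset)
  moreover have "a \<notin> f ` {x. f x \<in> X}" using assms(2) by blast
  ultimately show ?thesis by (simp add: Int_insert_left)
qed

definition is_square :: "'a::field \<Rightarrow> bool" where
  "is_square c \<longleftrightarrow> (\<exists>x. x^2 = c)"

lemma card_square_roots:
  assumes 2: "(2::'a::{finite,field}) \<noteq> 0" and c: "c \<noteq> 0"
  shows "card {w. w^2 = (c::'a)} = (if is_square c then 2 else 0)"
proof (cases "is_square c")
  case True
  then obtain x where x: "x^2 = c" by (auto simp: is_square_def)
  have "{w. w^2 = c} = {x, -x}"
  proof (rule set_eqI)
    fix w
    have "w^2 - x^2 = (w - x) * (w + x)" by algebra
    then have "w^2 = c \<longleftrightarrow> (w - x) * (w + x) = 0" using x by (metis eq_iff_diff_eq_0)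
    then show "w \<in> {w. w^2 = c} \<longleftrightarrow> w \<in> {x, -x}" by (simp add: eq_neg_iff_add_eq_0)
  qed
  moreover have "x \<noteq> -x"
  proof
    assume "x = -x"
    then have "2 * x = 0" by (simp only: mult_2 eq_neg_iff_add_eq_0)
    then show False using x c 2 by simp
  qed
  ultimately show ?thesis using True by simp
next
  case False then show ?thesis by (simp add: is_square_def)
qed

lemma card_nonzero_squares:
  assumes 2: "(2::'a::{finite,field}) \<noteq> 0"
  shows "2 * card {c::'a. c \<noteq> 0 \<and> is_square c} + 1 = CARD('a)"
proof -
  let ?Q = "{c::'a. c \<noteq> 0 \<and> is_square c}"
  let ?X = "{x::'a. x \<noteq> 0}"
  have "card ?X = (\<Sum>c\<in>?Q. \<Sum>x\<in>{x\<in>?X. x^2 = c}. (1::nat))"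
    by (simp only: card_eq_sum, rule sum.group[symmetric]) (auto simp: is_square_def)
  also have "\<dots> = (\<Sum>c\<in>?Q. 2)"
  proof (rule sum.cong[OF refl])
    fix c assume c: "c \<in> ?Q"
    then have "{x\<in>?X. x^2 = c} = {w. w^2 = c}" by auto
    then show "(\<Sum>x\<in>{x\<in>?X. x^2 = c}. (1::nat)) = 2" using card_square_roots[OF 2, of c] c by simp
  qed
  finally have "card ?X = 2 * card ?Q" by simp
  moreover have "card ?X + 1 = CARD('a)"
  proof -
    have "?X = UNIV - {0}" by auto
    then show ?thesis by (simp add: card_Diff_singleton)
  qed
  ultimately show ?thesis by simp
qed


definition cubic_map :: "'a::field \<Rightarrow> 'a" where
  "cubic_map u = u^3 - u^2"

definition cubic_fibre_card :: "'a::{finite,field} \<Rightarrow> nat" where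
  "cubic_fibre_card r = card {u. cubic_map u = r}"

lemma cubic_map_thirds:
  assumes 3: "(3::'a::field) \<noteq> 0" and x: "3 * x = (c::'a)"
  shows "cubic_map x = (c^3 - 3*c^2) / 27"
proof -
  have "27 * cubic_map x = (3*x)^3 - 3*(3*x)^2" unfolding cubic_map_def by algebra
  also have "\<dots> = c^3 - 3*c^2" by (simp only: x)
  moreover have "(27::'a) \<noteq> 0" using 3 by (rule twentyseven_neq_zero)
  ultimately show ?thesis by (simp add: eq_divide_eq mult.commute)
qed

lemma cubic_map_collision:
  assumes "cubic_map t1 = cubic_map t2" "t1 \<noteq> (t2::'a::field)"
  shows "t1^2 + t1*t2 + t2^2 - t1 - t2 = 0"
proof -
  have "(t1 - t2) * (t1^2 + t1*t2 + t2^2 - t1 - t2) = cubic_map t1 - cubic_map t2"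
    unfolding cubic_map_def by algebra
  then show ?thesis using assms by simp
qed

text \<open>Two distinct roots of the monic cubic \<open>u\<^sup>3 - u\<^sup>2 - r\<close> determine the third one
  through the sum of the roots.\<close>

lemma cubic_map_fibre:
  assumes "cubic_map t1 = r" "cubic_map t2 = r" "t1 \<noteq> (t2::'a::field)"
  shows "{u. cubic_map u = r} = {t1, t2, 1 - t1 - t2}"
proof -
  define Q where "Q = t1^2 + t1*t2 + t2^2 - t1 - t2"
  have Q0: "Q = 0" unfolding Q_def using cubic_map_collision assms by metis
  have "(u-t1)*(u-t2)*(u-(1-t1-t2)) = cubic_map u - r - Q*u + t1*Q + (r - cubic_map t1)" for u
    unfolding Q_def cubic_map_def by algebra
  then have "cubic_map u = r \<longleftrightarrow> (u-t1)*(u-t2)*(u-(1-t1-t2)) = 0" for u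
    using Q0 assms(1) by simp
  then show ?thesis by auto
qed

lemma cubic_map_double_root:
  assumes 3: "(3::'a::field) \<noteq> 0"
    and "cubic_map t1 = r" "cubic_map t2 = r" "t1 \<noteq> (t2::'a)" "1 - t1 - t2 = t1"
  shows "r = 0 \<or> r = -4/27"
proof -
  have Q: "t1^2 + t1*t2 + t2^2 - t1 - t2 = 0" using cubic_map_collision assms by metis
  have t2: "t2 = 1 - 2*t1" using assms(5) by (simp add: algebra_simps)
  have "t1 * (3*t1 - 2) = 0" using Q unfolding t2 by (simp add: algebra_simps power2_eq_square)
  then have "t1 = 0 \<or> 3 * t1 = 2" by auto
  then show ?thesis
  proof
    assume "t1 = 0" then show ?thesis using assms(2) by (simp add: cubic_map_def)
  next
    assume "3 * t1 = 2"
    then have "cubic_map t1 = (2^3 - 3*2^2) / 27" using cubic_map_thirds[OF 3] by blast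
    then show ?thesis using assms(2) by simp
  qed
qed

lemma cubic_fibre_card_cases:
  assumes 3: "(3::'a::{finite,field}) \<noteq> 0"
  shows "cubic_fibre_card r \<in> {0, 1, 3} \<or> (cubic_fibre_card r = 2 \<and> (r = 0 \<or> r = (-4/27::'a)))"
proof (cases "\<exists>t1 t2. cubic_map t1 = r \<and> cubic_map t2 = r \<and> t1 \<noteq> t2")
  case False
  show ?thesis
  proof (cases "\<exists>t. cubic_map t = r")
    case True
    then obtain t where "cubic_map t = r" by blast
    then have "{u. cubic_map u = r} = {t}" using False by blast
    then show ?thesis by (simp add: cubic_fibre_card_def)
  qed (simp add: cubic_fibre_card_def)
next
  case True
  then obtain t1 t2 where t: "cubic_map t1 = r" "cubic_map t2 = r" "t1 \<noteq> t2" by blast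
  have S: "{u. cubic_map u = r} = {t1, t2, 1 - t1 - t2}" by (rule cubic_map_fibre[OF t])
  consider "1 - t1 - t2 = t1" | "1 - t1 - t2 = t2" | "1 - t1 - t2 \<noteq> t1" "1 - t1 - t2 \<noteq> t2"
    by blast
  then show ?thesis
  proof cases
    case 1
    then have "r = 0 \<or> r = -4/27" using cubic_map_double_root[OF 3 t] by metis
    moreover have "{u. cubic_map u = r} = {t1, t2}" using S 1 by auto
    ultimately show ?thesis using t(3) by (simp add: cubic_fibre_card_def)
  next
    case 2
    then have "1 - t2 - t1 = t2" by (simp add: algebra_simps)
    then have "r = 0 \<or> r = -4/27" using cubic_map_double_root[OF 3 t(2,1)] t(3) by metis
    moreover have "{u. cubic_map u = r} = {t1, t2}" using S 2 by auto
    ultimately show ?thesis using t(3) by (simp add: cubic_fibre_card_def)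
  next
    case 3
    then show ?thesis using S t(3) by (simp add: cubic_fibre_card_def)
  qed
qed

lemma cubic_fibre_card_eq_2_set:
  assumes 2: "(2::'a::{finite,field}) \<noteq> 0" and 3: "(3::'a) \<noteq> 0"
  shows "{r::'a. cubic_fibre_card r = 2} = {0, -4/27}"
proof -
  have "{u. cubic_map u = (0::'a)} = {0, 1, 1 - 0 - 1}"
    by (rule cubic_map_fibre) (simp_all add: cubic_map_def)
  then have "cubic_fibre_card (0::'a) = 2" by (simp add: cubic_fibre_card_def insert_commute)
  moreover have "cubic_fibre_card (-4/27::'a) = 2"
  proof -
    have "cubic_map (2/3::'a) = -4/27" "cubic_map (-1/3::'a) = -4/27"
      using cubic_map_thirds[OF 3, of "2/3" 2] cubic_map_thirds[OF 3, of "-1/3" "-1"] 3 by simp_all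
    moreover have "(2/3::'a) \<noteq> -1/3" "1 - 2/3 - (-1/3) = (2/3::'a)"
      using 3 by (simp_all add: field_simps)
    ultimately have "{u. cubic_map u = (-4/27::'a)} = {2/3, -1/3, 2/3}"
      using cubic_map_fibre[of "2/3::'a" "-4/27" "-1/3"] by metis
    then have "{u. cubic_map u = (-4/27::'a)} = {2/3, -1/3}" by auto
    then show ?thesis using \<open>(2/3::'a) \<noteq> -1/3\<close> by (simp add: cubic_fibre_card_def)
  qed
  moreover have "cubic_fibre_card r = 2 \<Longrightarrow> r = 0 \<or> r = -4/27" for r :: 'a
    using cubic_fibre_card_cases[OF 3, of r] by auto
  ultimately show ?thesis by auto
qed


lemma sum_cubic_fibre_card: "(\<Sum>r\<in>UNIV. cubic_fibre_card (r::'a::{finite,field})) = CARD('a)"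
proof -
  have "(\<Sum>r\<in>UNIV. cubic_fibre_card (r::'a)) = (\<Sum>r\<in>UNIV. \<Sum>x\<in>{x\<in>UNIV. cubic_map x = (r::'a)}. (1::nat))"
    by (simp add: cubic_fibre_card_def)
  also have "\<dots> = (\<Sum>x\<in>(UNIV::'a set). 1)" by (rule sum.group) auto
  finally show ?thesis by simp
qed

lemma sum_cubic_fibre_pairs:
  "(\<Sum>r\<in>UNIV. cubic_fibre_card (r::'a::{finite,field}) * (cubic_fibre_card r - 1)) =
     card {(t, u). t \<noteq> u \<and> cubic_map t = cubic_map (u::'a)}"
proof -
  have "{(t, u). t \<noteq> u \<and> cubic_map t = cubic_map (u::'a)} =
      (SIGMA t:UNIV. {u. cubic_map u = cubic_map t} - {t})" by auto
  then have "card {(t, u). t \<noteq> u \<and> cubic_map t = cubic_map (u::'a)} =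
      (\<Sum>t\<in>UNIV. cubic_fibre_card (cubic_map (t::'a)) - 1)"
    by (simp add: cubic_fibre_card_def card_Diff_singleton)
  also have "\<dots> = (\<Sum>r\<in>UNIV. \<Sum>t\<in>{t\<in>UNIV. cubic_map t = (r::'a)}. cubic_fibre_card (cubic_map t) - 1)"
    by (rule sum.group[symmetric]) auto
  also have "\<dots> = (\<Sum>r\<in>UNIV. cubic_fibre_card (r::'a) * (cubic_fibre_card r - 1))"
    by (rule sum.cong) (simp_all add: cubic_fibre_card_def)
  finally show ?thesis by simp
qed

text \<open>A pair \<open>t \<noteq> u\<close> with \<open>cubic_map t = cubic_map u\<close> other than \<open>(0, 1)\<close> is determined by
  the ratio \<open>m = u / t\<close>, and then \<open>t = (1 + m) / (m\<^sup>2 + m + 1)\<close>.\<close>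

definition collision_of_ratio :: "'a::field \<Rightarrow> 'a \<times> 'a" where
  "collision_of_ratio m = ((1 + m) / (m^2 + m + 1), m * (1 + m) / (m^2 + m + 1))"

lemma cubic_map_collision_ratio:
  assumes t: "t \<noteq> 0" and "t \<noteq> u" and "cubic_map t = cubic_map (u::'a::field)"
  shows "\<exists>m. m \<noteq> 1 \<and> m \<noteq> -1 \<and> m^2 + m + 1 \<noteq> 0 \<and> (t, u) = collision_of_ratio m"
proof -
  define m where "m = u / t"
  have u: "u = m * t" using t by (simp add: m_def)
  have "t^2 + t*u + u^2 - t - u = 0" using cubic_map_collision assms(2,3) by metis
  then have "t * (t * (m^2 + m + 1) - (1 + m)) = 0" unfolding u by (simp add: algebra_simps power2_eq_square)
  then have e: "t * (m^2 + m + 1) = 1 + m" using t by simp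
  have N: "m^2 + m + 1 \<noteq> 0"
  proof
    assume "m^2 + m + 1 = 0"
    moreover from this have "1 + m = 0" using e by simp
    then have "m = -1" by (simp add: add_eq_0_iff)
    ultimately show False by simp
  qed
  have "m \<noteq> 1" "m \<noteq> -1" using assms(2) u e t N by auto
  moreover have "(t, u) = collision_of_ratio m" using u e N by (simp add: collision_of_ratio_def eq_divide_eq)
  ultimately show ?thesis using N by blast
qed

lemma collision_of_ratio_collision:
  assumes "m \<noteq> 1" "m \<noteq> -1" "m^2 + m + 1 \<noteq> (0::'a::field)"
  shows "collision_of_ratio m \<in> {(t, u). t \<noteq> u \<and> cubic_map t = cubic_map u}"
proof -
  define t where "t = (1 + m) / (m^2 + m + 1)"
  have "cubic_map t - cubic_map (m*t) = (t - m*t) * t * (t * (m^2 + m + 1) - (1 + m))"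
    unfolding cubic_map_def by algebra
  then have "cubic_map t = cubic_map (m * t)" using assms by (simp add: t_def)
  moreover have "t \<noteq> 0" using assms by (simp add: t_def add_eq_0_iff)
  moreover have "collision_of_ratio m = (t, m * t)" using assms by (simp add: collision_of_ratio_def t_def)
  ultimately show ?thesis using assms(1) by simp
qed

lemma cubic_map_collisions_eq:
  "{(t, u). t \<noteq> u \<and> cubic_map t = cubic_map (u::'a::field)} =
     insert (0, 1) (collision_of_ratio ` {m. m \<noteq> 1 \<and> m \<noteq> -1 \<and> m^2 + m + 1 \<noteq> 0})"
proof (rule set_eqI, rule iffI)
  fix p :: "'a \<times> 'a" assume "p \<in> {(t, u). t \<noteq> u \<and> cubic_map t = cubic_map u}"
  then obtain t u where p: "p = (t, u)" "t \<noteq> u" "cubic_map t = cubic_map u" by auto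
  show "p \<in> insert (0, 1) (collision_of_ratio ` {m. m \<noteq> 1 \<and> m \<noteq> -1 \<and> m^2 + m + 1 \<noteq> 0})"
  proof (cases "t = 0")
    case True
    then have "u * (u - 1) = 0"
      using cubic_map_collision[OF p(3,2)] by (simp add: algebra_simps power2_eq_square)
    then show ?thesis using p True by auto
  next
    case False
    then show ?thesis using cubic_map_collision_ratio[OF False p(2,3)] p(1) by blast
  qed
next
  fix p :: "'a \<times> 'a"
  assume "p \<in> insert (0, 1) (collision_of_ratio ` {m. m \<noteq> 1 \<and> m \<noteq> -1 \<and> m^2 + m + 1 \<noteq> 0})"
  then show "p \<in> {(t, u). t \<noteq> u \<and> cubic_map t = cubic_map u}"
  proof
    assume "p = (0, 1)" then show ?thesis by (simp add: cubic_map_def)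
  next
    assume "p \<in> collision_of_ratio ` {m. m \<noteq> 1 \<and> m \<noteq> -1 \<and> m^2 + m + 1 \<noteq> 0}"
    then obtain m where m: "m \<noteq> 1" "m \<noteq> -1" "m^2 + m + 1 \<noteq> 0" and p: "p = collision_of_ratio m"
      by blast
    show ?thesis unfolding p by (rule collision_of_ratio_collision[OF m])
  qed
qed

lemma inj_on_collision_of_ratio:
  "inj_on collision_of_ratio {m. m \<noteq> 1 \<and> m \<noteq> -1 \<and> m^2 + m + 1 \<noteq> (0::'a::field)}"
proof (rule inj_onI)
  have ratio: "snd (collision_of_ratio m) = m * fst (collision_of_ratio m)" for m :: 'a
    unfolding collision_of_ratio_def fst_conv snd_conv by (rule times_divide_eq_right[symmetric])
  have fst_nonzero: "fst (collision_of_ratio m) \<noteq> 0" if "m \<noteq> -1" "m^2 + m + 1 \<noteq> (0::'a)" for m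
    using that by (simp add: collision_of_ratio_def add_eq_0_iff)
  fix x y :: 'a
  assume x: "x \<in> {m. m \<noteq> 1 \<and> m \<noteq> -1 \<and> m^2 + m + 1 \<noteq> 0}"
    and xy: "collision_of_ratio x = collision_of_ratio y"
  have "snd (collision_of_ratio x) = x * fst (collision_of_ratio x)"
    "snd (collision_of_ratio x) = y * fst (collision_of_ratio x)"
    using ratio[of x] ratio[of y] xy by simp_all
  then have "x * fst (collision_of_ratio x) = y * fst (collision_of_ratio x)" by (rule trans[OF sym])
  then show "x = y" using fst_nonzero[of x] x by simp
qed

lemma card_cubic_map_collisions:
  assumes 2: "(2::'a::{finite,field}) \<noteq> 0" and 3: "(3::'a) \<noteq> 0"
  shows "card {(t, u). t \<noteq> u \<and> cubic_map t = cubic_map (u::'a)} + 1 + card {m::'a. m^2 + m + 1 = 0}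
    = CARD('a)"
proof -
  let ?M = "{m. m \<noteq> 1 \<and> m \<noteq> -1 \<and> m^2 + m + 1 \<noteq> (0::'a)}"
  have "(0, 1) \<notin> collision_of_ratio ` ?M" by (auto simp: collision_of_ratio_def add_eq_0_iff)
  then have "card {(t, u). t \<noteq> u \<and> cubic_map t = cubic_map (u::'a)} = card ?M + 1"
    by (simp add: cubic_map_collisions_eq card_image[OF inj_on_collision_of_ratio])
  moreover have "(1::'a) \<noteq> -1" using 2 by (simp add: eq_neg_iff_add_eq_0 one_add_one)
  then have "card (?M \<union> {1, -1}) = card ?M + 2" by (subst card_Un_disjoint) auto
  moreover have "CARD('a) = card (?M \<union> {1, -1}) + card {m::'a. m^2 + m + 1 = 0}"
  proof -
    have "(1::'a)^2 + 1 + 1 \<noteq> 0" using 3 by simp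
    then have "(UNIV::'a set) = (?M \<union> {1, -1}) \<union> {m. m^2 + m + 1 = 0}"
      "(?M \<union> {1, -1}) \<inter> {m. m^2 + m + 1 = 0} = {}" by auto
    then show ?thesis using card_Un_disjoint[of "?M \<union> {1, -1}" "{m. m^2 + m + 1 = 0}"] by simp
  qed
  ultimately show ?thesis by simp
qed

lemma card_roots_m2_m_1:
  assumes 2: "(2::'a::{finite,field}) \<noteq> 0"
  shows "card {m::'a. m^2 + m + 1 = 0} = card {w::'a. w^2 = -3}"
proof -
  have "bij_betw (\<lambda>m. 2*m + 1) {m::'a. m^2 + m + 1 = 0} {w. w^2 = -3}"
  proof (rule bij_betw_byWitness[where f'="\<lambda>w. (w - 1)/2"])
    show "\<forall>m\<in>{m::'a. m^2 + m + 1 = 0}. (2 * m + 1 - 1) / 2 = m" using 2 by simp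
    show "\<forall>w\<in>{w::'a. w^2 = -3}. 2 * ((w - 1) / 2) + 1 = w" using 2 by (auto simp: field_simps)
    have "(2*m + 1)^2 = -3" if "m^2 + m + 1 = (0::'a)" for m
    proof -
      have "(2*m + 1)^2 = 4 * (m^2 + m + 1) - (3::'a)" by algebra
      then show ?thesis by (simp only: that mult_zero_right diff_0)
    qed
    then show "(\<lambda>m. 2*m + 1) ` {m::'a. m^2 + m + 1 = 0} \<subseteq> {w. w^2 = -3}" by auto
    have N4: "4 * (((w - 1)/2)^2 + (w - 1)/2 + 1) = w^2 + (3::'a)" for w
    proof -
      have "4 * (m^2 + m + 1) = (2*m)^2 + 2*(2*m) + (4::'a)" for m by algebra
      moreover have "2 * ((w - 1)/2) = w - 1" using 2 by simp
      ultimately have "4 * (((w - 1)/2)^2 + (w - 1)/2 + 1) = (w - 1)^2 + 2*(w - 1) + 4" by metis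
      also have "\<dots> = w^2 + 3" by algebra
      finally show ?thesis .
    qed
    show "(\<lambda>w. (w - 1)/2) ` {w::'a. w^2 = -3} \<subseteq> {m. m^2 + m + 1 = 0}"
    proof
      fix m assume "m \<in> (\<lambda>w. (w - 1)/2) ` {w::'a. w^2 = -3}"
      then obtain w where w: "w^2 = -3" "m = (w - 1)/2" by blast
      have "4 * (m^2 + m + 1) = w^2 + 3" unfolding w(2) by (rule N4)
      also have "\<dots> = 0" using w(1) by simp
      finally have "4 * (m^2 + m + 1) = 0" .
      then show "m \<in> {m. m^2 + m + 1 = 0}" using four_neq_zero[OF 2] by (simp only: mult_eq_0_iff) simp
    qed
  qed
  then show ?thesis by (rule bij_betw_same_card)
qed

lemma cubic_fibre_counts:
  assumes 2: "(2::'a::{finite,field}) \<noteq> 0" and 3: "(3::'a) \<noteq> 0"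
  shows "card {r::'a. cubic_fibre_card r = 1} + 3 * card {r::'a. cubic_fibre_card r = 3} + 4 = CARD('a)"
    and "6 * card {r::'a. cubic_fibre_card r = 3} + 5 + card {w::'a. w^2 = -3} = CARD('a)"
    and "card {r::'a. cubic_fibre_card r = 0} + card {r::'a. cubic_fibre_card r = 1}
           + card {r::'a. cubic_fibre_card r = 3} + 2 = CARD('a)"
proof -
  let ?K = "cubic_fibre_card :: 'a \<Rightarrow> nat"
  let ?N = "\<lambda>k. card {r::'a. cubic_fibre_card r = k}"
  have "(0::'a) \<noteq> -4/27" using four_neq_zero[OF 2] twentyseven_neq_zero[OF 3] by simp
  then have N2: "?N 2 = 2" using cubic_fibre_card_eq_2_set[OF 2 3] by simp
  have split: "f (?K r) = f 0 * of_bool (?K r = 0) + f 1 * of_bool (?K r = 1)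
      + f 2 * of_bool (?K r = 2) + f 3 * of_bool (?K r = 3)" for f :: "nat \<Rightarrow> nat" and r
    using cubic_fibre_card_cases[OF 3, of r] by auto
  have count: "(\<Sum>r\<in>UNIV. f (?K r)) = f 0 * ?N 0 + f 1 * ?N 1 + f 2 * ?N 2 + f 3 * ?N 3"
    for f :: "nat \<Rightarrow> nat"
    by (subst split) (simp add: sum.distrib flip: sum_distrib_left)
  show "?N 1 + 3 * ?N 3 + 4 = CARD('a)"
    using count[of "\<lambda>k. k"] sum_cubic_fibre_card[where 'a='a] N2 by simp
  have "card {(t, u). t \<noteq> u \<and> cubic_map t = cubic_map (u::'a)} = 6 * ?N 3 + 4"
    using count[of "\<lambda>k. k * (k - 1)"] sum_cubic_fibre_pairs[where 'a='a] N2 by simp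
  then show "6 * ?N 3 + 5 + card {w::'a. w^2 = -3} = CARD('a)"
    using card_cubic_map_collisions[OF 2 3] card_roots_m2_m_1[OF 2] by simp
  show "?N 0 + ?N 1 + ?N 3 + 2 = CARD('a)"
    using count[of "\<lambda>k. 1"] N2 by simp
qed

definition quad_root_card :: "'a::{finite,field} \<Rightarrow> nat" where
  "quad_root_card z = card {u. z*u^2 - 3*u + 1 = 0}"

lemma quad_root_card_zero: "(3::'a::{finite,field}) \<noteq> 0 \<Longrightarrow> quad_root_card (0::'a) = 1"
proof -
  assume "(3::'a) \<noteq> 0"
  then have "{u::'a. 0*u^2 - 3*u + 1 = 0} = {1/3}" by (auto simp: field_simps)
  then show ?thesis by (simp add: quad_root_card_def)
qed

lemma quad_root_card_discriminant:
  assumes 2: "(2::'a::{finite,field}) \<noteq> 0" and z: "z \<noteq> 0"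
  shows "quad_root_card (z::'a) = card {w. w^2 = 9 - 4*z}"
proof -
  have id: "(2*z*u - 3)^2 = 4*z*(z*u^2 - 3*u + 1) + (9 - 4*z)" for u by algebra
  have "bij_betw (\<lambda>u. 2*z*u - 3) {u. z*u^2 - 3*u + 1 = 0} {w. w^2 = 9 - 4*z}"
  proof (rule bij_betw_byWitness[where f'="\<lambda>w. (w + 3)/(2*z)"])
    show "\<forall>u\<in>{u. z*u^2 - 3*u + 1 = 0}. (2*z*u - 3 + 3)/(2*z) = u" using 2 z by simp
    show "\<forall>w\<in>{w. w^2 = 9 - 4*z}. 2*z*((w + 3)/(2*z)) - 3 = w" using 2 z by simp
    show "(\<lambda>u. 2*z*u - 3) ` {u. z*u^2 - 3*u + 1 = 0} \<subseteq> {w. w^2 = 9 - 4*z}" using id by auto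
    show "(\<lambda>w. (w + 3)/(2*z)) ` {w. w^2 = 9 - 4*z} \<subseteq> {u. z*u^2 - 3*u + 1 = 0}"
    proof
      fix u assume "u \<in> (\<lambda>w. (w + 3)/(2*z)) ` {w. w^2 = 9 - 4*z}"
      then obtain w where w: "w^2 = 9 - 4*z" "u = (w + 3)/(2*z)" by blast
      have "2*z*u - 3 = w" unfolding w(2) using 2 z by simp
      then have "4*z*(z*u^2 - 3*u + 1) = 0" using id[of u] w(1) by simp
      then show "u \<in> {u. z*u^2 - 3*u + 1 = 0}" using z four_neq_zero[OF 2] by simp
    qed
  qed
  then show ?thesis unfolding quad_root_card_def by (rule bij_betw_same_card)
qed

lemma quad_root_card_eq:
  assumes 2: "(2::'a::{finite,field}) \<noteq> 0" and 3: "(3::'a) \<noteq> 0"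
  shows "quad_root_card (z::'a) =
    (if z = 0 \<or> 9 - 4*z = 0 then 1 else if is_square (9 - 4*z) then 2 else (0::nat))"
proof (cases "z = 0")
  case True
  then show ?thesis using quad_root_card_zero[OF 3] by simp
next
  case False
  show ?thesis
  proof (cases "9 - 4*z = 0")
    case True
    have "{w::'a. w^2 = 0} = {0}" by auto
    then show ?thesis using True False quad_root_card_discriminant[OF 2 False] by simp
  next
    case nz: False
    then show ?thesis using False quad_root_card_discriminant[OF 2 False] card_square_roots[OF 2 nz]
      by simp
  qed
qed

lemma card_Collect_affine:
  assumes "(a::'a::{finite,field}) \<noteq> 0"
  shows "card {z. P (b - a*z)} = card {c. P c}"
proof -
  have "bij_betw (\<lambda>z. b - a*z) {z. P (b - a*z)} {c. P c}"
    by (rule bij_betw_byWitness[where f'="\<lambda>c. (b - c)/a"]) (use assms in auto)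
  then show ?thesis by (rule bij_betw_same_card)
qed

lemma quad_root_card_counts:
  assumes 2: "(2::'a::{finite,field}) \<noteq> 0" and 3: "(3::'a) \<noteq> 0"
  shows "card {z::'a. quad_root_card z = 1} = 2"
    and "card {z::'a. quad_root_card z = 2} + 1 = card {c::'a. c \<noteq> 0 \<and> is_square c}"
    and "card {z::'a. quad_root_card z = 0} + card {c::'a. c \<noteq> 0 \<and> is_square c} + 1 = CARD('a)"
proof -
  have 4: "(4::'a) \<noteq> 0" using four_neq_zero[OF 2] .
  have sq9: "is_square (9::'a)" unfolding is_square_def by (rule exI[of _ 3]) simp
  have sq0: "is_square (0::'a)" unfolding is_square_def by (rule exI[of _ 0]) simp
  have "9 - 4*z = 0 \<longleftrightarrow> z = 9/4" for z :: 'a using 4 by (auto simp: field_simps)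
  then have "{z::'a. quad_root_card z = 1} = {0, 9/4}"
    using quad_root_card_eq[OF 2 3] by auto
  moreover have "(0::'a) \<noteq> 9/4" using 4 nine_neq_zero[OF 3] by simp
  ultimately show "card {z::'a. quad_root_card z = 1} = 2" by simp
  let ?Q = "{c::'a. c \<noteq> 0 \<and> is_square c}"
  have "{z::'a. quad_root_card z = 2} = {z. 9 - 4*z \<noteq> 9 \<and> 9 - 4*z \<noteq> 0 \<and> is_square (9 - 4*z)}"
    using quad_root_card_eq[OF 2 3] 4 by auto
  then have "card {z::'a. quad_root_card z = 2} = card {c::'a. c \<noteq> 9 \<and> c \<noteq> 0 \<and> is_square c}"
    using card_Collect_affine[OF 4, where P="\<lambda>c. c \<noteq> 9 \<and> c \<noteq> 0 \<and> is_square c" and b=9]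
    by (simp only:)
  moreover have "?Q = insert 9 {c::'a. c \<noteq> 9 \<and> c \<noteq> 0 \<and> is_square c}"
    using sq9 nine_neq_zero[OF 3] by auto
  ultimately show "card {z::'a. quad_root_card z = 2} + 1 = card ?Q" by simp
  have "{z::'a. quad_root_card z = 0} = {z. \<not> is_square (9 - 4*z)}"
    using quad_root_card_eq[OF 2 3] sq0 sq9 by auto
  then have "card {z::'a. quad_root_card z = 0} = card {c::'a. \<not> is_square c}"
    using card_Collect_affine[OF 4, where P="\<lambda>c. \<not> is_square c" and b=9] by (simp only:)
  moreover have "CARD('a) = card {c::'a. \<not> is_square c} + card (insert 0 ?Q)"
  proof -
    have "(UNIV::'a set) = {c. \<not> is_square c} \<union> insert 0 ?Q" "{c. \<not> is_square c} \<inter> insert 0 ?Q = {}"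
      using sq0 by auto
    then show ?thesis using card_Un_disjoint[of "{c::'a. \<not> is_square c}" "insert 0 ?Q"] by simp
  qed
  ultimately show "card {z::'a. quad_root_card z = 0} + card ?Q + 1 = CARD('a)" by simp
qed

section \<open>The polar line \<open>\<ell> = \<ell>\<^sub>0\<^sup>\<sigma>\<close>\<close>

definition ell :: "('a::field^4) set set" where
  "ell = line (v4 3 1 0 0) (v4 0 0 0 1)"

lemma ell_in_lines: "(ell::('a::field^4) set set) \<in> lines"
  unfolding ell_def lines_def indep2_def by force

lemma polarLine_line0:
  assumes 3: "(3::'a::field) \<noteq> 0"
  shows "polarLine line0 = (ell::('a^4) set set)"
proof (rule set_eqI)
  have i0: "indep2 (v4 0 1 0 0) (v4 0 0 1 (1::'a))" and i7: "indep2 (v4 3 1 0 0) (v4 0 0 0 (1::'a))"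
    by (simp_all add: indep2_def)
  fix Q :: "('a^4) set"
  show "Q \<in> polarLine line0 \<longleftrightarrow> Q \<in> ell"
  proof
    assume Q: "Q \<in> polarLine line0"
    then obtain u where u: "u \<noteq> 0" "Q = pt u" by (auto simp: polarLine_eq elim: pointsE)
    have "pt (v4 0 1 0 0) \<in> (line0::('a^4) set set)" "pt (v4 0 0 1 1) \<in> (line0::('a^4) set set)"
      unfolding line0_def by (rule pt_in_line_left, rule pt_in_line_right)
    then have "Q \<in> polar_plane (v4 0 1 0 0)" "Q \<in> polar_plane (v4 0 0 1 1)"
      using Q by (auto simp: polarLine_eq)
    then have "u$2 = 0" "u$0 = 3 * u$1" using u 3 by (auto simp: pt_in_polar_plane_iff symp_expand)
    then have "u = (u$1) *s v4 3 1 0 0 + (u$3) *s v4 0 0 0 1"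
      by (subst v4_expand[of u]) (simp add: algebra_simps)
    then show "Q \<in> ell" unfolding ell_def using u pt_in_line_iff[OF i7] by blast
  next
    assume Q: "Q \<in> ell"
    then obtain u where u: "u \<noteq> 0" "Q = pt u"
      using line_subset_points[OF i7] unfolding ell_def by (blast elim: pointsE)
    then obtain x y where xy: "u = x *s v4 3 1 0 0 + y *s v4 0 0 0 1"
      using Q pt_in_line_iff[OF i7] unfolding ell_def by blast
    show "Q \<in> polarLine line0" unfolding polarLine_eq
    proof (intro CollectI conjI allI impI)
      show "Q \<in> points" using u by simp
      fix v :: "'a^4" assume v: "v \<noteq> 0 \<and> pt v \<in> line0"
      then obtain a b where "v = a *s v4 0 1 0 0 + b *s v4 0 0 1 1"
        using pt_in_line_iff[OF i0] unfolding line0_def by blast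
      then have "symp v u = 0" using xy by (simp add: symp_expand algebra_simps)
      then show "Q \<in> polar_plane v" using u pt_in_polar_plane_iff by blast
    qed
  qed
qed

lemma Gorbit_self: "l \<in> Gorbit (l::('a::field^4) set set)"
proof -
  have "v v* gmat 1 0 0 1 = (v::'a^4)" for v by (simp add: vector_matrix_mult_gmat vec4_eq_iff)
  then have "actLine (gmat 1 0 0 1) l = l" by (simp add: actLine_def actPoint_def)
  moreover have "gmat 1 0 0 1 \<in> (Gmats::('a^4^4) set)" unfolding Gmats_def by force
  ultimately show ?thesis unfolding Gorbit_def by force
qed

lemma polarLine_Gorbit_line0:
  assumes 3: "(3::'a::field) \<noteq> 0"
  shows "polarLine ` Gorbit line0 = Gorbit (ell::('a^4) set set)"
proof -
  have "line0 \<subseteq> (points::('a^4) set set)"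
    unfolding line0_def by (rule line_subset_points) (simp add: indep2_def)
  then have "polarLine (actLine M line0) = actLine M ell" if "M \<in> Gmats" for M :: "'a^4^4"
  proof -
    from that obtain a b c d where M: "M = gmat a b c d" and D: "a*d - b*c \<noteq> (0::'a)"
      by (auto simp: Gmats_def)
    show ?thesis using polarLine_actLine[OF D \<open>line0 \<subseteq> points\<close>] polarLine_line0[OF 3] M by simp
  qed
  then show ?thesis unfolding Gorbit_def by (auto simp: image_iff)
qed

lemma Gorbit_invariants:
  assumes 3: "(3::'a::{finite,field}) \<noteq> 0" and m: "m \<in> lines" and "l \<in> Gorbit (m::('a^4) set set)"
  shows "l \<in> lines" and "card (l \<inter> Ccurve) = card (m \<inter> Ccurve)"
    and "OD0 l = OD0 m" and "OD2 l = OD2 m"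
    and "l \<subseteq> oscPlane t \<Longrightarrow> \<exists>t'. m \<subseteq> oscPlane t'"
proof -
  obtain a b c d where D: "a*d - b*c \<noteq> (0::'a)" and l: "l = actPoint (gmat a b c d) ` m"
    using \<open>l \<in> Gorbit m\<close> by (auto simp: Gorbit_def Gmats_def actLine_def)
  interpret cubic_automorphism "actPoint (gmat a b c d)" "actPoint (gmat d (-b) (-c) a)"
    by (rule gmat_cubic_automorphism[OF 3 D])
  have m_points: "m \<subseteq> points" using m by (rule lines_subset_points)
  show "l \<in> lines" unfolding l using D m by (rule actPoint_gmat_lines)
  show "card (l \<inter> Ccurve) = card (m \<inter> Ccurve)" unfolding l using m_points by (rule card_image_Int_Ccurve)
  show "OD0 l = OD0 m" unfolding l using m_points by (rule OD0_image)
  show "OD2 l = OD2 m" unfolding l using m_points by (rule OD2_image)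
  show "l \<subseteq> oscPlane t \<Longrightarrow> \<exists>t'. m \<subseteq> oscPlane t'" unfolding l using m_points by (rule subset_oscPlane_image)
qed

text \<open>\<open>\<ell>\<close> consists of \<open>P(\<infinity>)\<close> and the points \<open>(3, 1, 0, 3 s)\<close>; the factor \<open>3\<close> makes
  the point with parameter \<open>s\<close> lie on \<open>\<Pi>(u)\<close> exactly when \<open>u\<^sup>3 - u\<^sup>2 = s\<close>.\<close>

definition ell_pt :: "'a::field \<Rightarrow> ('a^4) set" where
  "ell_pt s = pt (v4 3 1 0 (3 * s))"

definition Pinf :: "('a::field^4) set" where
  "Pinf = pt (v4 0 0 0 1)"

lemma ell_eq:
  assumes 3: "(3::'a::field) \<noteq> 0"
  shows "ell = insert Pinf (range (ell_pt::'a \<Rightarrow> _))"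
proof (rule set_eqI, rule iffI)
  fix P :: "('a^4) set" assume "P \<in> ell"
  then obtain x y where xy: "x \<noteq> 0 \<or> y \<noteq> 0" "P = pt (x *s v4 3 1 0 0 + y *s v4 0 0 0 1)"
    by (auto simp: ell_def line_def)
  show "P \<in> insert Pinf (range ell_pt)"
  proof (cases "x = 0")
    case True
    then have "P = pt (y *s v4 0 0 0 1)" "y \<noteq> 0" using xy by (auto simp del: smult_v4)
    then show ?thesis by (simp add: Pinf_def pt_smult del: smult_v4)
  next
    case False
    then have "x *s v4 3 1 0 0 + y *s v4 0 0 0 1 = x *s v4 3 1 0 (3 * (y / (3*x)))"
      using 3 by simp
    then have "P = ell_pt (y / (3*x))" using xy False by (simp add: pt_smult ell_pt_def del: smult_v4)
    then show ?thesis by simp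
  qed
next
  fix P :: "('a^4) set" assume "P \<in> insert Pinf (range ell_pt)"
  moreover have "Pinf \<in> ell" by (simp add: ell_def Pinf_def pt_in_line_right)
  moreover have "ell_pt s \<in> ell" for s :: 'a
    unfolding ell_def line_def ell_pt_def by (rule CollectI, rule exI[of _ 1], rule exI[of _ "3 * s"]) simp
  ultimately show "P \<in> ell" by blast
qed

lemma inj_ell_pt: "(3::'a::field) \<noteq> 0 \<Longrightarrow> inj (ell_pt::'a \<Rightarrow> _)"
  by (rule injI) (auto simp: ell_pt_def pt_eq_iff)

lemma Pinf_notin_range_ell_pt: "Pinf \<notin> range (ell_pt::'a::field \<Rightarrow> _)"
  by (auto simp: ell_pt_def Pinf_def pt_eq_iff)

lemma card_ell_Int:
  "(3::'a::{finite,field}) \<noteq> 0 \<Longrightarrow>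
   card (ell \<inter> X) = card {s::'a. ell_pt s \<in> X} + (if Pinf \<in> X then 1 else 0)"
  by (simp add: ell_eq card_insert_range_Int[OF inj_ell_pt] Pinf_notin_range_ell_pt)

lemma Pinf_in_Ccurve: "Pinf \<in> (Ccurve::('a::field^4) set set)"
  unfolding Ccurve_def Pinf_def by (rule range_eqI[of _ _ None]) (simp add: Cvec_def)

lemma ell_pt_notin_Ccurve: "(3::'a::field) \<noteq> 0 \<Longrightarrow> ell_pt (s::'a) \<notin> Ccurve"
proof
  assume 3: "(3::'a) \<noteq> 0" and "ell_pt s \<in> Ccurve"
  then obtain t c where c: "c \<noteq> 0" "v4 3 1 0 (3 * s) = c *s Cvec t"
    by (auto simp: Ccurve_def ell_pt_def pt_eq_iff)
  show False
  proof (cases t)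
    case None then show False using c 3 by (simp add: Cvec_def)
  next
    case (Some u)
    have "(v4 3 1 0 (3 * s))$1 = (c *s Cvec t)$1" "(v4 3 1 0 (3 * s))$2 = (c *s Cvec t)$2"
      using c(2) by simp_all
    then have "c * u = 1" "c * u^2 = 0" using Some by (simp_all add: Cvec_def)
    moreover have "c * u^2 = (c * u) * u" by (simp add: power2_eq_square)
    ultimately show False by simp
  qed
qed

lemma ell_pt_in_oscPlane_iff:
  assumes 3: "(3::'a::field) \<noteq> 0"
  shows "ell_pt s \<in> oscPlane t \<longleftrightarrow> (\<exists>u. t = Some u \<and> cubic_map u = (s::'a))"
proof (cases t)
  case (Some u)
  have "dot4 (v4 (- (u^3)) (3 * u^2) (- 3 * u) 1) (v4 3 1 0 (3 * s)) = 3 * (s - cubic_map u)"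
    by (simp add: cubic_map_def algebra_simps)
  then show ?thesis using Some 3 by (auto simp: ell_pt_def oscPlane_def pt_in_plane_iff)
qed (use 3 in \<open>simp add: ell_pt_def oscPlane_def pt_in_plane_iff\<close>)

lemma nOsc_ell_pt: "(3::'a::{finite,field}) \<noteq> 0 \<Longrightarrow> nOsc (ell_pt s) = cubic_fibre_card (s::'a)"
proof -
  assume "(3::'a) \<noteq> 0"
  then have "{t. ell_pt s \<in> oscPlane t} = Some ` {u. cubic_map u = s}"
    by (auto simp: ell_pt_in_oscPlane_iff)
  then show ?thesis by (simp add: nOsc_def cubic_fibre_card_def card_image)
qed

lemma nOsc_Pinf: "nOsc (Pinf::('a::{finite,field}^4) set) \<noteq> 0"
proof -
  have "Pinf \<in> oscPlane (None::'a option)" by (simp add: Pinf_def oscPlane_def pt_in_plane_iff)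
  then show ?thesis by (auto simp: nOsc_def)
qed

lemma ell_pt_in_tangentLine_Some_iff:
  assumes 3: "(3::'a::field) \<noteq> 0"
  shows "ell_pt s \<in> tangentLine (Some u) \<longleftrightarrow> u * (2 - 3*u) = 0 \<and> s = u^2 - 2*(u::'a)^3"
proof -
  have i: "indep2 (v4 1 u (u^2) (u^3)) (v4 0 1 (2*u) (3*u^2))"
    using indep2_Cvec_Cderiv[of "Some u"] by (simp add: Cvec_def Cderiv_def)
  have "ell_pt s \<in> tangentLine (Some u) \<longleftrightarrow>
     (\<exists>x y. v4 3 1 0 (3 * s) = x *s v4 1 u (u^2) (u^3) + y *s v4 0 1 (2*u) (3*u^2))"
    unfolding ell_pt_def tangentLine_def by (simp add: pt_in_line_iff[OF i] del: smult_v4 add_v4)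
  also have "\<dots> \<longleftrightarrow> u * (2 - 3*u) = 0 \<and> s = u^2 - 2*u^3"
  proof
    assume "\<exists>x y. v4 3 1 0 (3 * s) = x *s v4 1 u (u^2) (u^3) + y *s v4 0 1 (2*u) (3*u^2)"
    then obtain x y where "3 = x" "1 = x*u + y" "0 = x*u^2 + y*(2*u)" "3 * s = x*u^3 + y*(3*u^2)"
      by auto
    moreover from this have "y = 1 - 3*u" by (simp add: algebra_simps)
    ultimately have "u * (2 - 3*u) = 0" "3 * s = 3 * (u^2 - 2*u^3)"
      by (simp_all add: algebra_simps power2_eq_square power3_eq_cube)
    then show "u * (2 - 3*u) = 0 \<and> s = u^2 - 2*u^3" using 3 by (simp only: mult_cancel_left) simp
  next
    assume "u * (2 - 3*u) = 0 \<and> s = u^2 - 2*u^3"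
    then have u: "u * (2 - 3*u) = 0" and s: "s = u^2 - 2*u^3" by auto
    have "v4 3 1 0 (3 * s) = v4 (3 * 1 + (1 - 3*u) * 0) (3 * u + (1 - 3*u) * 1)
        (3 * u^2 + (1 - 3*u) * (2*u)) (3 * u^3 + (1 - 3*u) * (3*u^2))"
      unfolding v4_eq_iff by (intro conjI) (use u s in algebra)+
    then have "v4 3 1 0 (3 * s) = 3 *s v4 1 u (u^2) (u^3) + (1 - 3*u) *s v4 0 1 (2*u) (3*u^2)"
      by (simp only: smult_v4 add_v4 mult_1_right mult_0_right)
    then show "\<exists>x y. v4 3 1 0 (3 * s) = x *s v4 1 u (u^2) (u^3) + y *s v4 0 1 (2*u) (3*u^2)"
      by blast
  qed
  finally show ?thesis .
qed

lemma ell_pt_notin_tangentLine_None: "(3::'a::field) \<noteq> 0 \<Longrightarrow> ell_pt (s::'a) \<notin> tangentLine None"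
proof
  have i: "indep2 (v4 0 0 0 1) (v4 0 0 1 (0::'a))" by (simp add: indep2_def)
  assume 3: "(3::'a) \<noteq> 0" and "ell_pt s \<in> tangentLine None"
  then obtain x y where "v4 3 1 0 (3 * s) = x *s v4 0 0 0 1 + y *s v4 0 0 1 (0::'a)"
    unfolding ell_pt_def tangentLine_def using pt_in_line_iff[OF i] by (simp del: smult_v4 add_v4) blast
  then show False using 3 by simp
qed

lemma ell_pt_in_tangentLine_iff:
  assumes 3: "(3::'a::field) \<noteq> 0"
  shows "(\<exists>t. ell_pt s \<in> tangentLine t) \<longleftrightarrow> s = 0 \<or> s = (-4/27::'a)"
proof -
  have none: "ell_pt s \<notin> tangentLine None" using 3 by (rule ell_pt_notin_tangentLine_None)
  have twothirds: "u^2 - 2*u^3 = (-4/27::'a)" if "3 * u = 2" for u :: 'a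
  proof -
    have "27 * (u^2 - 2*u^3) = 3*(3*u)^2 - 2*(3*u)^3" by algebra
    also have "\<dots> = -4" unfolding that by simp
    finally show ?thesis using twentyseven_neq_zero[OF 3] by (simp add: field_simps)
  qed
  have "(\<exists>t. ell_pt s \<in> tangentLine t) \<longleftrightarrow> (\<exists>u. ell_pt s \<in> tangentLine (Some u))"
  proof
    assume "\<exists>t. ell_pt s \<in> tangentLine t"
    then obtain t where t: "ell_pt s \<in> tangentLine t" by blast
    with none obtain u where "t = Some u" by (cases t) auto
    with t show "\<exists>u. ell_pt s \<in> tangentLine (Some u)" by blast
  qed blast
  also have "\<dots> \<longleftrightarrow> (\<exists>u. (u = 0 \<or> 3 * u = 2) \<and> s = u^2 - 2*u^3)"
    by (simp add: ell_pt_in_tangentLine_Some_iff[OF 3])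
  also have "\<dots> \<longleftrightarrow> s = 0 \<or> s = -4/27"
  proof
    assume "\<exists>u. (u = 0 \<or> 3 * u = 2) \<and> s = u^2 - 2*u^3"
    then show "s = 0 \<or> s = -4/27" using twothirds by auto
  next
    assume "s = 0 \<or> s = -4/27"
    then show "\<exists>u. (u = 0 \<or> 3 * u = 2) \<and> s = u^2 - 2*u^3"
    proof
      assume "s = 0"
      then show ?thesis by (intro exI[of _ 0]) simp
    next
      assume "s = -4/27"
      have "3 * (2/3) = (2::'a)" using 3 by simp
      moreover from this have "s = (2/3)^2 - 2*(2/3::'a)^3" using \<open>s = -4/27\<close> twothirds by simp
      ultimately show ?thesis by blast
    qed
  qed
  finally show ?thesis .
qed

lemma ell_pt_point_classes:
  assumes 3: "(3::'a::{finite,field}) \<noteq> 0"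
  shows "ell_pt s \<notin> P1"
    and "ell_pt s \<in> P2 \<longleftrightarrow> s = 0 \<or> s = (-4/27::'a)"
    and "ell_pt s \<in> P3 \<longleftrightarrow> cubic_fibre_card s = 3"
    and "ell_pt s \<in> P4 \<longleftrightarrow> cubic_fibre_card s = 1"
    and "ell_pt s \<in> P5 \<longleftrightarrow> cubic_fibre_card s = 0"
  using ell_pt_notin_Ccurve[OF 3] ell_pt_in_tangentLine_iff[OF 3] nOsc_ell_pt[OF 3]
  by (simp_all add: P1_def P2_def P3_def P4_def P5_def ell_pt_def)

lemma Pinf_point_classes:
  "Pinf \<in> P1" "Pinf \<notin> P2" "Pinf \<notin> P3" "Pinf \<notin> P4" "Pinf \<notin> (P5::('a::{finite,field}^4) set set)"
  using Pinf_in_Ccurve nOsc_Pinf by (auto simp: P1_def P2_def P3_def P4_def P5_def)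

lemma OD0_ell:
  assumes 2: "(2::'a::{finite,field}) \<noteq> 0" and 3: "(3::'a) \<noteq> 0"
  shows "OD0 (ell::('a^4) set set) = [1, 2, card {r::'a. cubic_fibre_card r = 3},
    card {r::'a. cubic_fibre_card r = 1}, card {r::'a. cubic_fibre_card r = 0}]"
proof -
  have "(0::'a) \<noteq> -4/27" using four_neq_zero[OF 2] twentyseven_neq_zero[OF 3] by simp
  then have "card {s::'a. s = 0 \<or> s = -4/27} = 2"
    by (intro card_2_iff[THEN iffD2] exI[of _ 0] exI[of _ "-4/27::'a"]) auto
  then show ?thesis
    by (simp add: OD0_def card_ell_Int[OF 3] ell_pt_point_classes[OF 3] Pinf_point_classes)
qed


definition ell_plane :: "'a::field \<Rightarrow> ('a^4) set set" where
  "ell_plane z = plane (v4 1 (-3) z 0)"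

definition ell_plane_inf :: "('a::field^4) set set" where
  "ell_plane_inf = plane (v4 0 0 1 0)"

lemma ell_subset_plane_iff:
  assumes 3: "(3::'a::field) \<noteq> 0"
  shows "(ell::('a^4) set set) \<subseteq> plane w \<longleftrightarrow> 3 * w$0 + w$1 = 0 \<and> w$3 = 0"
proof -
  have pt: "ell_pt s \<in> plane w \<longleftrightarrow> 3 * w$0 + w$1 + 3 * s * w$3 = 0" for s :: 'a
    by (simp add: ell_pt_def pt_in_plane_iff dot4_expand algebra_simps)
  have inf: "Pinf \<in> plane w \<longleftrightarrow> w$3 = 0"
    by (simp add: Pinf_def pt_in_plane_iff dot4_expand)
  show ?thesis
  proof
    assume "ell \<subseteq> plane w"
    then have "Pinf \<in> plane w" "ell_pt 0 \<in> plane w" using ell_eq[OF 3] by auto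
    then show "3 * w$0 + w$1 = 0 \<and> w$3 = 0" using pt inf by simp
  next
    assume "3 * w$0 + w$1 = 0 \<and> w$3 = 0"
    then show "ell \<subseteq> plane w" using pt inf by (auto simp: ell_eq[OF 3])
  qed
qed

lemma planes_through_ell:
  assumes 3: "(3::'a::field) \<noteq> 0"
  shows "{H \<in> planes. (ell::('a^4) set set) \<subseteq> H} = insert ell_plane_inf (range ell_plane)"
proof (rule set_eqI, rule iffI)
  fix H :: "('a^4) set set" assume "H \<in> {H \<in> planes. ell \<subseteq> H}"
  then obtain w where w: "w \<noteq> 0" "H = plane w" "3 * w$0 + w$1 = 0" "w$3 = 0"
    by (auto simp: planes_def ell_subset_plane_iff[OF 3])
  show "H \<in> insert ell_plane_inf (range ell_plane)"
  proof (cases "w$0 = 0")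
    case True
    then have w_eq: "w = w$2 *s v4 0 0 1 0" using w(3,4) by (subst v4_expand[of w]) simp
    then have w2: "w$2 \<noteq> 0" using w(1) by auto
    have "H = plane (w$2 *s v4 0 0 1 0)" using w(2) by (subst (asm) w_eq)
    then have "H = ell_plane_inf"
      using plane_smult[OF w2, of "v4 0 0 1 0"] by (simp only: ell_plane_inf_def)
    then show ?thesis by simp
  next
    case False
    have w_eq: "w = w$0 *s v4 1 (-3) (w$2 / w$0) 0" using False w(3,4)
      by (subst v4_expand[of w]) (simp add: algebra_simps eq_neg_iff_add_eq_0)
    have "H = plane (w$0 *s v4 1 (-3) (w$2 / w$0) 0)" using w(2) by (subst (asm) w_eq)
    then have "H = ell_plane (w$2 / w$0)"
      using plane_smult[OF False, of "v4 1 (-3) (w$2 / w$0) 0"] by (simp only: ell_plane_def)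
    then show ?thesis by simp
  qed
next
  fix H :: "('a^4) set set" assume "H \<in> insert ell_plane_inf (range ell_plane)"
  moreover have "ell \<subseteq> (ell_plane_inf::('a^4) set set)" "ell \<subseteq> ell_plane z" for z :: 'a
    by (simp_all add: ell_plane_inf_def ell_plane_def ell_subset_plane_iff[OF 3])
  ultimately show "H \<in> {H \<in> planes. ell \<subseteq> H}"
    by (auto simp: ell_plane_inf_def ell_plane_def planes_def)
qed

lemma inj_ell_plane: "inj (ell_plane::'a::field \<Rightarrow> _)"
proof (rule injI)
  fix z z' :: 'a assume e: "ell_plane z = ell_plane z'"
  have "pt (v4 (-z') 0 1 0) \<in> ell_plane z'" by (simp add: ell_plane_def pt_in_plane_iff)
  then show "z = z'" unfolding e[symmetric] by (simp add: ell_plane_def pt_in_plane_iff)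
qed

lemma ell_plane_inf_notin_range: "ell_plane_inf \<notin> range (ell_plane::'a::field \<Rightarrow> _)"
proof
  assume "ell_plane_inf \<in> range (ell_plane::'a \<Rightarrow> _)"
  then obtain z :: 'a where "ell_plane_inf = ell_plane z" by blast
  moreover have "pt (v4 1 0 0 (0::'a)) \<in> ell_plane_inf" by (simp add: ell_plane_inf_def pt_in_plane_iff)
  moreover have "pt (v4 1 0 0 (0::'a)) \<notin> ell_plane z" by (simp add: ell_plane_def pt_in_plane_iff)
  ultimately show False by simp
qed

lemma card_plane_Int_Ccurve: "card (H \<inter> Ccurve) = card {t. pt (Cvec t) \<in> H}"
proof -
  have "H \<inter> Ccurve = (\<lambda>t. pt (Cvec t)) ` {t. pt (Cvec t) \<in> H}" by (auto simp: Ccurve_def)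
  moreover have "inj_on (\<lambda>t. pt (Cvec t)) {t. pt (Cvec t) \<in> H}"
    by (rule inj_onI) (rule Ccurve_pt_inj)
  ultimately show ?thesis by (simp add: card_image)
qed

lemma card_ell_plane_Int_Ccurve: "card (ell_plane z \<inter> Ccurve) = quad_root_card (z::'a::{finite,field}) + 1"
proof -
  have "{t. pt (Cvec t) \<in> ell_plane z} = insert None (Some ` {u. z*u^2 - 3*u + 1 = 0})"
  proof (rule set_eqI)
    fix t :: "'a option"
    show "t \<in> {t. pt (Cvec t) \<in> ell_plane z} \<longleftrightarrow> t \<in> insert None (Some ` {u. z*u^2 - 3*u + 1 = 0})"
      by (cases t) (auto simp: ell_plane_def pt_in_plane_iff Cvec_nonzero Cvec_def algebra_simps)
  qed
  then show ?thesis by (simp add: card_plane_Int_Ccurve card_image quad_root_card_def)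
qed

lemma card_ell_plane_inf_Int_Ccurve:
  "card ((ell_plane_inf::('a::{finite,field}^4) set set) \<inter> Ccurve) = 2"
proof -
  have "{t. pt (Cvec t) \<in> (ell_plane_inf::('a^4) set set)} = {None, Some 0}"
  proof (rule set_eqI)
    fix t :: "'a option"
    show "t \<in> {t. pt (Cvec t) \<in> ell_plane_inf} \<longleftrightarrow> t \<in> {None, Some 0}"
      by (cases t) (auto simp: ell_plane_inf_def pt_in_plane_iff Cvec_nonzero Cvec_def)
  qed
  then show ?thesis by (simp add: card_plane_Int_Ccurve)
qed

lemma ell_not_subset_oscPlane:
  assumes 3: "(3::'a::field) \<noteq> 0"
  shows "\<not> (ell::('a^4) set set) \<subseteq> oscPlane t"
proof -
  have "ell_pt 0 \<notin> (oscPlane None::('a^4) set set)" "Pinf \<notin> (oscPlane (Some u)::('a^4) set set)" for u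
    using 3 by (simp_all add: ell_pt_def Pinf_def oscPlane_def pt_in_plane_iff)
  then show ?thesis using ell_eq[OF 3] by (cases t) auto
qed

lemma card_planes_through_ell:
  assumes 3: "(3::'a::{finite,field}) \<noteq> 0" and "X \<subseteq> planes"
  shows "card {H \<in> X. (ell::('a^4) set set) \<subseteq> H} =
    card {z::'a. ell_plane z \<in> X} + (if ell_plane_inf \<in> X then 1 else 0)"
proof -
  have "{H \<in> X. ell \<subseteq> H} = insert ell_plane_inf (range ell_plane) \<inter> X"
    using assms(2) planes_through_ell[OF 3] by blast
  then show ?thesis by (simp add: card_insert_range_Int[OF inj_ell_plane ell_plane_inf_notin_range])
qed

lemma OD2_ell:
  assumes 2: "(2::'a::{finite,field}) \<noteq> 0" and 3: "(3::'a) \<noteq> 0"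
  shows "OD2 (ell::('a^4) set set) =
    [0, 3, card {z::'a. quad_root_card z = 2}, card {z::'a. quad_root_card z = 0}, 0]"
proof -
  note through = card_planes_through_ell[OF 3]
  have not_osc: "ell_plane z \<notin> H1" "(ell_plane_inf::('a^4) set set) \<notin> H1" for z :: 'a
    using planes_through_ell[OF 3] ell_not_subset_oscPlane[OF 3] by (fastforce simp: H1_def)+
  have planes: "ell_plane z \<in> planes" "(ell_plane_inf::('a^4) set set) \<in> planes" for z :: 'a
    by (auto simp: ell_plane_def ell_plane_inf_def planes_def)
  have "card {H \<in> H1. (ell::('a^4) set set) \<subseteq> H} = 0"
    using ell_not_subset_oscPlane[OF 3] by (auto simp: H1_def)
  moreover have "card {H \<in> H2. (ell::('a^4) set set) \<subseteq> H} = card {z::'a. quad_root_card z = 1} + 1"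
    by (subst through) (auto simp: H2_def planes card_ell_plane_Int_Ccurve card_ell_plane_inf_Int_Ccurve)
  moreover have "card {H \<in> H3. (ell::('a^4) set set) \<subseteq> H} = card {z::'a. quad_root_card z = 2}"
    by (subst through) (auto simp: H3_def planes card_ell_plane_Int_Ccurve card_ell_plane_inf_Int_Ccurve)
  moreover have "card {H \<in> H4. (ell::('a^4) set set) \<subseteq> H} = card {z::'a. quad_root_card z = 0}"
    by (subst through) (auto simp: H4_def planes not_osc card_ell_plane_Int_Ccurve card_ell_plane_inf_Int_Ccurve)
  moreover have "card {H \<in> H5. (ell::('a^4) set set) \<subseteq> H} = 0"
  proof -
    have "ell_plane z \<inter> Ccurve \<noteq> {}" for z :: 'a
    proof
      assume "ell_plane z \<inter> Ccurve = {}"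
      then show False using card_ell_plane_Int_Ccurve[of z] by simp
    qed
    moreover have "(ell_plane_inf::('a^4) set set) \<inter> Ccurve \<noteq> {}"
      using card_ell_plane_inf_Int_Ccurve[where 'a='a] by auto
    ultimately have "H \<inter> Ccurve \<noteq> {}" if "H \<in> {H \<in> planes. ell \<subseteq> H}" for H :: "('a^4) set set"
      using that unfolding planes_through_ell[OF 3] by auto
    then have "{H \<in> H5. (ell::('a^4) set set) \<subseteq> H} = {}" by (auto simp: H5_def)
    then show ?thesis by simp
  qed
  ultimately show ?thesis using quad_root_card_counts(1)[OF 2 3] by (simp add: OD2_def)
qed

lemma of_nat_prime_neq_zero:
  assumes "prime p" and "CHAR('a::{semiring_1,zero_neq_one}) \<noteq> p"
  shows "(of_nat p :: 'a) \<noteq> 0"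
proof
  assume "(of_nat p :: 'a) = 0"
  then have "CHAR('a) dvd p" by (simp add: of_nat_eq_0_iff_char_dvd)
  then show False using assms by (auto simp: prime_nat_iff)
qed

lemma map_real_OD2_ell:
  assumes q: "CARD('a::{finite,field}) = q" and 2: "(2::'a) \<noteq> 0" and 3: "(3::'a) \<noteq> 0"
  shows "map real (OD2 (ell::('a^4) set set)) = [0, 3, (real q - 3) / 2, (real q - 1) / 2, 0]"
proof -
  let ?Q = "card {c::'a. c \<noteq> 0 \<and> is_square c}"
  have "2 * real ?Q + 1 = real q"
    using card_nonzero_squares[OF 2] q by (simp flip: of_nat_mult of_nat_Suc)
  moreover have "real (card {z::'a. quad_root_card z = 2}) + 1 = real ?Q"
    and "real (card {z::'a. quad_root_card z = 0}) + real ?Q + 1 = real q"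
    using quad_root_card_counts[OF 2 3] q by (simp_all flip: of_nat_add of_nat_Suc)
  ultimately show ?thesis by (simp add: OD2_ell[OF 2 3] field_simps)
qed

lemma map_real_OD0_ell:
  assumes q: "CARD('a::{finite,field}) = q" and 2: "(2::'a) \<noteq> 0" and 3: "(3::'a) \<noteq> 0"
  shows "\<not> is_square (-3::'a) \<Longrightarrow>
      map real (OD0 (ell::('a^4) set set)) = [1, 2, (real q - 5) / 6, (real q - 3) / 2, (real q + 1) / 3]"
    and "is_square (-3::'a) \<Longrightarrow>
      map real (OD0 (ell::('a^4) set set)) = [1, 2, (real q - 7) / 6, (real q - 1) / 2, (real q - 1) / 3]"
proof -
  let ?N = "\<lambda>k. real (card {r::'a. cubic_fibre_card r = k})"
  let ?S = "real (card {w::'a. w^2 = -3})"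
  have "?N 1 + 3 * ?N 3 + 4 = real q" "6 * ?N 3 + 5 + ?S = real q" "?N 0 + ?N 1 + ?N 3 + 2 = real q"
    using cubic_fibre_counts[OF 2 3] q by (simp_all flip: of_nat_add of_nat_mult of_nat_Suc)
  moreover have "?S = (if is_square (-3::'a) then 2 else 0)"
    using card_square_roots[OF 2, of "-3"] 3 by simp
  ultimately show "\<not> is_square (-3::'a) \<Longrightarrow>
      map real (OD0 (ell::('a^4) set set)) = [1, 2, (real q - 5) / 6, (real q - 3) / 2, (real q + 1) / 3]"
    and "is_square (-3::'a) \<Longrightarrow>
      map real (OD0 (ell::('a^4) set set)) = [1, 2, (real q - 7) / 6, (real q - 1) / 2, (real q - 1) / 3]"
    by (simp_all add: OD0_ell[OF 2 3] field_simps)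
qed

theorem mainTheorem11:
  fixes q :: nat
  assumes "CARD('a::{finite,field}) = q"
    and "CHAR('a) \<noteq> 2" and "CHAR('a) \<noteq> 3"
  shows "let L4 = Gorbit (line0 :: ('a ^ 4) set set); L7 = polarLine ` L4 in
     (\<exists>m\<in>L7. L7 = Gorbit m) \<and>
     (\<forall>l\<in>L7. l \<in> lines \<and> card (l \<inter> Ccurve) = 1 \<and> (\<forall>t. \<not> l \<subseteq> oscPlane t) \<and>
        map real (OD2 l) = [0, 3, (real q - 3) / 2, (real q - 1) / 2, 0] \<and>
        ((\<not> (\<exists>x::'a. x^2 = -3)) \<longrightarrow>
           map real (OD0 l) = [1, 2, (real q - 5) / 6, (real q - 3) / 2, (real q + 1) / 3]) \<and>
        ((\<exists>x::'a. x^2 = -3) \<longrightarrow>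
           map real (OD0 l) = [1, 2, (real q - 7) / 6, (real q - 1) / 2, (real q - 1) / 3]))"
proof -
  have 2: "(2::'a) \<noteq> 0" and 3: "(3::'a) \<noteq> 0"
    using of_nat_prime_neq_zero[of 2] of_nat_prime_neq_zero[of 3] assms(2,3) by simp_all
  have "card ((ell::('a^4) set set) \<inter> Ccurve) = 1"
    by (simp add: card_ell_Int[OF 3] ell_pt_notin_Ccurve[OF 3] Pinf_in_Ccurve)
  then have "l \<in> lines \<and> card (l \<inter> Ccurve) = 1 \<and> (\<forall>t. \<not> l \<subseteq> oscPlane t) \<and>
      map real (OD2 l) = [0, 3, (real q - 3) / 2, (real q - 1) / 2, 0] \<and>
      (\<not> is_square (-3::'a) \<longrightarrow>
         map real (OD0 l) = [1, 2, (real q - 5) / 6, (real q - 3) / 2, (real q + 1) / 3]) \<and>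
      (is_square (-3::'a) \<longrightarrow>
         map real (OD0 l) = [1, 2, (real q - 7) / 6, (real q - 1) / 2, (real q - 1) / 3])"
    if "l \<in> Gorbit ell" for l :: "('a^4) set set"
    using Gorbit_invariants[OF 3 ell_in_lines that] ell_not_subset_oscPlane[OF 3]
      map_real_OD2_ell[OF assms(1) 2 3] map_real_OD0_ell[OF assms(1) 2 3] by auto
  then show ?thesis
    unfolding Let_def polarLine_Gorbit_line0[OF 3] is_square_def[symmetric]
    using Gorbit_self[of ell] by blast
qed

end
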